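(* Let $\tau$ be a tau-function of the extended bigraded Toda hierarchy with wave operators $W,\bar W$. For a difference operator $a$ commuting with $L$ and a function $h(s,\mathbf t,\bar{\mathbf t},\mathbf x)$, say that $(a,h)$ satisfies the ASvM relations if $$-\frac{(a_-W)z^s}{Wz^s}=G(z)\frac h\tau-\frac h\tau,\qquad \frac{(a_+\bar W)z^s}{\bar Wz^s}=\bar G(z)\frac h\tau-\frac h\tau.$$ Then for every $n\ge1$ and $p\ge0$ the pairs $(L^{\frac nk},\partial_{t_n}\tau)$, $(L^{\frac nm},\partial_{\bar t_n}\tau)$, $(2L^p\log L,\partial_{x_p}\tau)$ and $(L^0,s\tau)$ satisfy the ASvM relations (here $\partial_{x_0}=\partial_s$ and $L^0=1$). Equivalently, the induced vector fields on tau-functions are $\partial_{t_n}$, $\partial_{\bar t_n}$, $\partial_{x_p}$ and multiplication by $x_0=s$, up to adding a function from $\mathcal F$.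
   Context: Let $s$ be a variable, $\Lambda$ the shift $(\Lambda f)(s)=f(s+1)$, $\mathcal A$ the space of formal difference operators $\sum_{i\in\mathbb Z}a_i(s)\Lambda^i$, $A_+=\sum_{i\ge0}a_i\Lambda^i$, $A_-=\sum_{i<0}a_i\Lambda^i$, products $(a(s)\Lambda^i)(b(s)\Lambda^j)=a(s)b(s+i)\Lambda^{i+j}$ where defined; operators act on $z^s$ by $(a(s)\Lambda^i\partial_s^j)z^s=a(s)z^i(\log z)^jz^s$. Fix $k,m\ge1$. Variables: $s=x_0$, $\mathbf x=(x_1,\dots)$, $\mathbf t=(t_1,\dots)$, $\bar{\mathbf t}=(\bar t_1,\dots)$, where $t_{nk}$ and $\bar t_{nm}$ are distinct variables. Let $[z]=(z,z^2/2,z^3/3,\dots)$; for a function $g(s,\mathbf t,\bar{\mathbf t},\mathbf x)$ put $G(z)g=g(s,\mathbf t-[z^{-1}],\bar{\mathbf t},\mathbf x)$, $\bar G(z)g=g(s+1,\mathbf t,\bar{\mathbf t}+[z],\mathbf x)$. A tau-function of the EBTH is a function $\tau(s,\mathbf t,\bar{\mathbf t},\mathbf x)$ such that, writing $G(z)\tau/\tau=1+\sum_{i\ge1}w_iz^{-i}$ and $\bar G(z)\tau/\tau=\sum_{i\ge0}\bar w_iz^i$, the wave operators $W=1+\sum_{i\ge1}w_i\Lambda^{-i}$, $\bar W=\sum_{i\ge0}\bar w_i\Lambda^i$ ($\bar w_0\ne0$) satisfy $W\Lambda^kW^{-1}=\bar W\Lambda^{-m}\bar W^{-1}=:L$, $L=\Lambda^k+u_{k-1}\Lambda^{k-1}+\dots+u_{-m}\Lambda^{-m}$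 ($u_{-m}\ne0$), and the EBTH flows $\partial_{t_n}W=-(L^{\frac nk})_-W$, $\partial_{t_n}\bar W=(L^{\frac nk})_+\bar W$, $\partial_{\bar t_n}W=-(L^{\frac nm})_-W$, $\partial_{\bar t_n}\bar W=(L^{\frac nm})_+\bar W$ ($n\ge1$), $\partial_{x_n}W=-(2L^n\log L)_-W$, $\partial_{x_n}\bar W=(2L^n\log L)_+\bar W$ ($n\ge0$). Here for $n\in\mathbb Z$, $L^{\frac nk}:=W\Lambda^nW^{-1}$, $L^{\frac nm}:=\bar W\Lambda^{-n}\bar W^{-1}$, and $\log L=\frac12W\partial_sW^{-1}-\frac12\bar W\partial_s\bar W^{-1}$. $\mathcal F$ is the space of functions $f(s,\mathbf x)$ with $f(s+1,\mathbf x)=f(s,\mathbf x)$. *)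

theory Defs
  imports "HOL-Analysis.Analysis"
begin

text \<open>Independent variables: s = x_0, t_n, tbar_n, x_n (n >= 1).  The constructors
  T 0, Tb 0, X 0 are unused dummy variables.\<close>
datatype var = S | T nat | Tb nat | X nat

type_synonym pt = "var \<Rightarrow> real"
type_synonym fn = "pt \<Rightarrow> complex"

definition xv :: "nat \<Rightarrow> var" where
  "xv p = (if p = 0 then S else X p)"

definition pd :: "var \<Rightarrow> fn \<Rightarrow> fn" where
  "pd v f = (\<lambda>p. vector_derivative (\<lambda>y. f (p(v := y))) (at (p v)))"

definition iterpd :: "var list \<Rightarrow> fn \<Rightarrow> fn" where
  "iterpd vs f = foldr pd vs f"

definition smooth_fn :: "fn \<Rightarrow> bool" where
  "smooth_fn f \<longleftrightarrow> (\<forall>vs.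
      (\<forall>v p. (\<lambda>y. iterpd vs f (p(v := y))) differentiable (at (p v))) \<and>
      (\<forall>v w. pd v (pd w (iterpd vs f)) = pd w (pd v (iterpd vs f))))"

definition shiftp :: "int \<Rightarrow> pt \<Rightarrow> pt" where
  "shiftp i p = p(S := p S + of_int i)"

definition MI :: "nat \<Rightarrow> (nat \<Rightarrow> nat) set" where
  "MI j = {m. (\<forall>i. m i \<noteq> 0 \<longrightarrow> 1 \<le> i \<and> i \<le> j) \<and> (\<Sum>i=1..j. i * m i) = j}"

fun dmi :: "(nat \<Rightarrow> var) \<Rightarrow> (nat \<Rightarrow> nat) \<Rightarrow> nat \<Rightarrow> fn \<Rightarrow> fn" where
  "dmi v m 0 g = g"
| "dmi v m (Suc i) g = (pd (v (Suc i)) ^^ m (Suc i)) (dmi v m i g)"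

text \<open>coefficient of z^{-j} in G(z)g = g(s, t - [z^{-1}], tbar, x) (Taylor expansion)\<close>
definition Gc :: "nat \<Rightarrow> fn \<Rightarrow> fn" where
  "Gc j g = (\<lambda>p. \<Sum>m\<in>MI j.
      (\<Prod>i=1..j. (complex_of_real (- 1 / real i)) ^ (m i) / fact (m i)) * dmi T m j g p)"

text \<open>coefficient of z^{j} in Gbar(z)g = g(s+1, t, tbar + [z], x)\<close>
definition Gbc :: "nat \<Rightarrow> fn \<Rightarrow> fn" where
  "Gbc j g = (\<lambda>p. \<Sum>m\<in>MI j.
      (\<Prod>i=1..j. (complex_of_real (1 / real i)) ^ (m i) / fact (m i)) * dmi Tb m j g (shiftp 1 p))"

section \<open>Formal difference operators  sum_i a_i(s) Lambda^i\<close>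

type_synonym dop = "int \<Rightarrow> fn"

text \<open>product (a Lambda^i)(b Lambda^j) = a(s) b(s+i) Lambda^{i+j}; the sum is the
  (finite, where the product is defined) sum over contributing terms\<close>
definition dmul :: "dop \<Rightarrow> dop \<Rightarrow> dop" (infixl "**" 70) where
  "A ** B = (\<lambda>k p. \<Sum>i\<in>{i. A i \<noteq> (\<lambda>_. 0) \<and> B (k - i) \<noteq> (\<lambda>_. 0)}.
                      A i p * B (k - i) (shiftp i p))"

definition lam :: "int \<Rightarrow> dop" where
  "lam n = (\<lambda>i p. if i = n then 1 else 0)"

definition dadd :: "dop \<Rightarrow> dop \<Rightarrow> dop" where
  "dadd A B = (\<lambda>i p. A i p + B i p)"

definition dsmul :: "complex \<Rightarrow> dop \<Rightarrow> dop" where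
  "dsmul c A = (\<lambda>i p. c * A i p)"

definition dplus :: "dop \<Rightarrow> dop" where
  "dplus A = (\<lambda>i. if i \<ge> 0 then A i else (\<lambda>_. 0))"

definition dminus :: "dop \<Rightarrow> dop" where
  "dminus A = (\<lambda>i. if i < 0 then A i else (\<lambda>_. 0))"

definition dpd :: "var \<Rightarrow> dop \<Rightarrow> dop" where
  "dpd v A = (\<lambda>i. pd v (A i))"

definition dpow :: "dop \<Rightarrow> nat \<Rightarrow> dop" where
  "dpow A n = ((\<lambda>B. A ** B) ^^ n) (lam 0)"

definition inv_neg :: "dop \<Rightarrow> dop" where
  "inv_neg W = (THE V. (\<forall>i>0. V i = (\<lambda>_. 0)) \<and> W ** V = lam 0 \<and> V ** W = lam 0)"

definition inv_pos :: "dop \<Rightarrow> dop" where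
  "inv_pos W = (THE V. (\<forall>i<0. V i = (\<lambda>_. 0)) \<and> W ** V = lam 0 \<and> V ** W = lam 0)"

definition Wop :: "fn \<Rightarrow> dop" where
  "Wop \<tau> = (\<lambda>i p. if i \<le> 0 then Gc (nat (- i)) \<tau> p / \<tau> p else 0)"

definition Wbop :: "fn \<Rightarrow> dop" where
  "Wbop \<tau> = (\<lambda>i p. if i \<ge> 0 then Gbc (nat i) \<tau> p / \<tau> p else 0)"

text \<open>L^{n/k} := W Lambda^n W^{-1}\<close>
definition Lk :: "fn \<Rightarrow> int \<Rightarrow> dop" where
  "Lk \<tau> n = (Wop \<tau> ** lam n) ** inv_neg (Wop \<tau>)"

text \<open>L^{n/m} := Wbar Lambda^{-n} Wbar^{-1}\<close>
definition Lm :: "fn \<Rightarrow> int \<Rightarrow> dop" where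
  "Lm \<tau> n = (Wbop \<tau> ** lam (- n)) ** inv_pos (Wbop \<tau>)"

definition Lax :: "nat \<Rightarrow> fn \<Rightarrow> dop" where
  "Lax k \<tau> = Lk \<tau> (int k)"

text \<open>log L = 1/2 W d_s W^{-1} - 1/2 Wbar d_s Wbar^{-1}; using
  W d_s W^{-1} = d_s + W (d_s W^{-1}) (coefficient-wise derivative), the d_s terms cancel\<close>
definition logL :: "fn \<Rightarrow> dop" where
  "logL \<tau> = dadd (dsmul (1/2) (Wop \<tau> ** dpd S (inv_neg (Wop \<tau>))))
                 (dsmul (- 1/2) (Wbop \<tau> ** dpd S (inv_pos (Wbop \<tau>))))"

definition tau_fn :: "nat \<Rightarrow> nat \<Rightarrow> fn \<Rightarrow> bool" where
  "tau_fn k m \<tau> \<longleftrightarrow>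
     smooth_fn \<tau> \<and> (\<forall>p. \<tau> p \<noteq> 0) \<and> Wbop \<tau> 0 \<noteq> (\<lambda>_. 0) \<and>
     Lax k \<tau> = Lm \<tau> (int m) \<and>
     (\<forall>i. (i > int k \<or> i < - int m) \<longrightarrow> Lax k \<tau> i = (\<lambda>_. 0)) \<and>
     Lax k \<tau> (int k) = (\<lambda>_. 1) \<and> Lax k \<tau> (- int m) \<noteq> (\<lambda>_. 0) \<and>
     (\<forall>n\<ge>1. dpd (T n) (Wop \<tau>) = dsmul (-1) (dminus (Lk \<tau> (int n)) ** Wop \<tau>) \<and>
             dpd (T n) (Wbop \<tau>) = dplus (Lk \<tau> (int n)) ** Wbop \<tau>) \<and>
     (\<forall>n\<ge>1. dpd (Tb n) (Wop \<tau>) = dsmul (-1) (dminus (Lm \<tau> (int n)) ** Wop \<tau>) \<and>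
             dpd (Tb n) (Wbop \<tau>) = dplus (Lm \<tau> (int n)) ** Wbop \<tau>) \<and>
     (\<forall>n. dpd (xv n) (Wop \<tau>) =
              dsmul (-1) (dminus (dsmul 2 (dpow (Lax k \<tau>) n ** logL \<tau>)) ** Wop \<tau>) \<and>
           dpd (xv n) (Wbop \<tau>) =
              dplus (dsmul 2 (dpow (Lax k \<tau>) n ** logL \<tau>)) ** Wbop \<tau>)"

text \<open>quotient of formal power series (in one formal variable) with function coefficients\<close>
definition sdiv :: "(nat \<Rightarrow> fn) \<Rightarrow> (nat \<Rightarrow> fn) \<Rightarrow> nat \<Rightarrow> fn" where
  "sdiv num den = (THE q. \<forall>j p. num j p = (\<Sum>i\<le>j. q i p * den (j - i) p))"

text \<open>(a,h) satisfies the ASvM relations (for a commuting with L):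
  -(a_- W) z^s / (W z^s) = G(z)(h/tau) - h/tau   (series in z^{-1}) and
  (a_+ Wbar) z^s / (Wbar z^s) = Gbar(z)(h/tau) - h/tau   (series in z).\<close>
definition ASvM :: "nat \<Rightarrow> fn \<Rightarrow> dop \<Rightarrow> fn \<Rightarrow> bool" where
  "ASvM k \<tau> a h \<longleftrightarrow>
     a ** Lax k \<tau> = Lax k \<tau> ** a \<and>
     (\<forall>j. sdiv (\<lambda>j p. - (dminus a ** Wop \<tau>) (- int j) p) (\<lambda>j. Wop \<tau> (- int j)) j
          = (\<lambda>p. Gc j (\<lambda>q. h q / \<tau> q) p - (if j = 0 then h p / \<tau> p else 0))) \<and>
     (\<forall>j. sdiv (\<lambda>j. (dplus a ** Wbop \<tau>) (int j)) (\<lambda>j. Wbop \<tau> (int j)) j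
          = (\<lambda>p. Gbc j (\<lambda>q. h q / \<tau> q) p - (if j = 0 then h p / \<tau> p else 0)))"

end

theory Submission
  imports Defs
begin

text \<open>Write the wave functions as W z^s = z^s G(z)\<tau>/\<tau> and Wbar z^s = z^s Gbar(z)\<tau>/\<tau>. A flow
  d_v W = -a_- W, d_v Wbar = a_+ Wbar turns the left-hand sides of the ASvM relations into the
  logarithmic derivatives d_v log (G(z)\<tau>/\<tau>) and d_v log (Gbar(z)\<tau>/\<tau>). As G(z) and Gbar(z)
  are ring homomorphisms commuting with d_v, these are G(z)(d_v\<tau>/\<tau>) - d_v\<tau>/\<tau> and
  Gbar(z)(d_v\<tau>/\<tau>) - d_v\<tau>/\<tau>; coefficientwise, multiplicativity is a Leibniz rule for Taylor
  coefficients. The operators also commute with L: L^(n/k) and L^(n/m) are conjugates of powers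
  of \<Lambda>, and log L commutes with L because W d_s W^-1 and Wbar d_s Wbar^-1 have the same
  commutator -d_s L with L. For (1, s\<tau>) both sides are explicit: G(z) fixes s and Gbar(z)
  shifts it by 1.\<close>

no_notation matrix_matrix_mult (infixl "**" 70)

section \<open>Partial derivatives\<close>

definition has_pd :: "var \<Rightarrow> fn \<Rightarrow> fn \<Rightarrow> bool" where
  "has_pd v f g \<longleftrightarrow> (\<forall>p. ((\<lambda>y. f (p(v := y))) has_vector_derivative g p) (at (p v)))"

lemma has_pd_imp_pd: "has_pd v f g \<Longrightarrow> pd v f = g"
  unfolding has_pd_def pd_def by (auto intro!: ext vector_derivative_at)

lemma has_pd_differentiable: "has_pd v f g \<Longrightarrow> (\<lambda>y. f (p(v := y))) differentiable at (p v)"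
  unfolding has_pd_def by (auto intro: differentiableI_vector)

lemma has_pd_pdI: "(\<And>p. (\<lambda>y. f (p(v := y))) differentiable at (p v)) \<Longrightarrow> has_pd v f (pd v f)"
  unfolding has_pd_def pd_def using vector_derivative_works by auto

lemma has_pd_const: "has_pd v (\<lambda>p. c) (\<lambda>p. 0)"
  unfolding has_pd_def by auto

lemma has_pd_add: "has_pd v f f' \<Longrightarrow> has_pd v g g' \<Longrightarrow> has_pd v (\<lambda>p. f p + g p) (\<lambda>p. f' p + g' p)"
  unfolding has_pd_def by (auto intro!: derivative_intros)

lemma has_pd_cmult: "has_pd v f f' \<Longrightarrow> has_pd v (\<lambda>p. c * f p) (\<lambda>p. c * f' p)"
  unfolding has_pd_def by (auto intro!: derivative_intros)

lemma has_pd_mult: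
  "has_pd v f f' \<Longrightarrow> has_pd v g g' \<Longrightarrow> has_pd v (\<lambda>p. f p * g p) (\<lambda>p. f' p * g p + f p * g' p)"
  unfolding has_pd_def
proof (intro allI)
  fix p
  assume "\<forall>p. ((\<lambda>y. f (p(v := y))) has_vector_derivative f' p) (at (p v))"
    and "\<forall>p. ((\<lambda>y. g (p(v := y))) has_vector_derivative g' p) (at (p v))"
  then show "((\<lambda>y. f (p(v := y)) * g (p(v := y))) has_vector_derivative f' p * g p + f p * g' p)
               (at (p v))"
    using has_vector_derivative_mult[of "\<lambda>y. f (p(v := y))" "f' p" "p v" UNIV
        "\<lambda>y. g (p(v := y))" "g' p"]
    by (simp add: algebra_simps)
qed

lemma has_pd_sum:
  "(\<And>i. i \<in> I \<Longrightarrow> has_pd v (f i) (f' i)) \<Longrightarrow> has_pd v (\<lambda>p. \<Sum>i\<in>I. f i p) (\<lambda>p. \<Sum>i\<in>I. f' i p)"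
  unfolding has_pd_def by (auto intro!: has_vector_derivative_sum)

lemma has_pd_inverse:
  assumes "has_pd v f f'" and "\<And>p. f p \<noteq> 0"
  shows "has_pd v (\<lambda>p. inverse (f p)) (\<lambda>p. - f' p * (inverse (f p) * inverse (f p)))"
  unfolding has_pd_def
proof
  fix p
  have "((inverse \<circ> (\<lambda>y. f (p(v := y)))) has_vector_derivative
          f' p * (- (inverse (f p) * inverse (f p)))) (at (p v))"
    using assms(1)[unfolded has_pd_def, rule_format, of p] DERIV_inverse[of "f p"] assms(2)[of p]
    by (intro field_vector_diff_chain_at) (simp_all add: power2_eq_square)
  then show "((\<lambda>y. inverse (f (p(v := y)))) has_vector_derivative
               - f' p * (inverse (f p) * inverse (f p))) (at (p v))"
    by (simp add: o_def)
qed

lemma shiftp_upd: "v \<noteq> S \<Longrightarrow> shiftp i (p(v := y)) = (shiftp i p)(v := y)"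
  unfolding shiftp_def by (auto simp: fun_upd_twist)

lemma shiftp_S [simp]: "shiftp i p S = p S + of_int i"
  unfolding shiftp_def by auto

lemma shiftp_shiftp: "shiftp i (shiftp j p) = shiftp (i + j) p"
  unfolding shiftp_def by auto

lemma shiftp_0 [simp]: "shiftp 0 p = p"
  unfolding shiftp_def by auto

lemma has_pd_shift:
  assumes f: "has_pd v f f'"
  shows "has_pd v (\<lambda>p. f (shiftp i p)) (\<lambda>p. f' (shiftp i p))"
  unfolding has_pd_def
proof
  fix p
  show "((\<lambda>y. f (shiftp i (p(v := y)))) has_vector_derivative f' (shiftp i p)) (at (p v))"
  proof (cases "v = S")
    case False
    then have "shiftp i p v = p v" unfolding shiftp_def by auto
    then show ?thesis
      using f[unfolded has_pd_def, rule_format, of "shiftp i p"] False by (simp add: shiftp_upd)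
  next
    case True
    let ?q = "shiftp i p"
    have "(((\<lambda>y. f (?q(S := y))) \<circ> (\<lambda>y. y + of_int i)) has_vector_derivative
             (1::real) *\<^sub>R f' ?q) (at (p S))"
      using f[unfolded has_pd_def, rule_format, of ?q] True
      by (intro vector_diff_chain_at) (auto intro!: derivative_eq_intros)
    moreover have "?q(S := y + of_int i) = shiftp i (p(S := y))" for y
      unfolding shiftp_def by auto
    ultimately show ?thesis using True by (simp add: o_def)
  qed
qed

section \<open>Smooth functions\<close>

lemma smooth_fn_pd: "smooth_fn f \<Longrightarrow> smooth_fn (pd v f)"
  unfolding smooth_fn_def
proof (intro allI)
  fix vs
  have "iterpd vs (pd v f) = iterpd (vs @ [v]) f"
    unfolding iterpd_def by simp
  moreover assume "\<forall>vs. (\<forall>w p. (\<lambda>y. iterpd vs f (p(w := y))) differentiable at (p w)) \<and>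
    (\<forall>w u. pd w (pd u (iterpd vs f)) = pd u (pd w (iterpd vs f)))"
  ultimately show "(\<forall>w p. (\<lambda>y. iterpd vs (pd v f) (p(w := y))) differentiable at (p w)) \<and>
    (\<forall>w u. pd w (pd u (iterpd vs (pd v f))) = pd u (pd w (iterpd vs (pd v f))))"
    by simp
qed

lemma smooth_fn_has_pd: "smooth_fn f \<Longrightarrow> has_pd v f (pd v f)"
  unfolding smooth_fn_def by (rule has_pd_pdI) (drule spec[of _ "[]"], simp add: iterpd_def)

lemma pd_commute: "smooth_fn f \<Longrightarrow> pd v (pd w f) = pd w (pd v f)"
  unfolding smooth_fn_def by (drule spec[of _ "[]"], simp add: iterpd_def)

text \<open>Closure properties of smooth_fn are obtained through this inductive closure:
  it is stable under every pd and its mixed partials commute, hence it consists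
  of smooth functions.\<close>

inductive_set smooth_closure :: "fn set" where
  smooth: "smooth_fn f \<Longrightarrow> f \<in> smooth_closure"
| const: "(\<lambda>p. c) \<in> smooth_closure"
| inverse: "smooth_fn g \<Longrightarrow> (\<forall>p. g p \<noteq> 0) \<Longrightarrow> (\<lambda>p. inverse (g p)) \<in> smooth_closure"
| add: "f \<in> smooth_closure \<Longrightarrow> g \<in> smooth_closure \<Longrightarrow> (\<lambda>p. f p + g p) \<in> smooth_closure"
| mult: "f \<in> smooth_closure \<Longrightarrow> g \<in> smooth_closure \<Longrightarrow> (\<lambda>p. f p * g p) \<in> smooth_closure"

lemma pd_inverse:
  "smooth_fn g \<Longrightarrow> (\<forall>p. g p \<noteq> 0) \<Longrightarrow>
   pd u (\<lambda>p. inverse (g p)) = (\<lambda>p. - pd u g p * (inverse (g p) * inverse (g p)))"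
  using has_pd_imp_pd[OF has_pd_inverse[OF smooth_fn_has_pd]] by auto

lemma smooth_closure_has_pd:
  "f \<in> smooth_closure \<Longrightarrow> has_pd v f (pd v f) \<and> pd v f \<in> smooth_closure"
proof (induction f arbitrary: v rule: smooth_closure.induct)
  case (smooth f)
  then show ?case by (simp add: smooth_fn_has_pd smooth_fn_pd smooth_closure.smooth)
next
  case (const c)
  then show ?case
    using has_pd_const[of v c] has_pd_imp_pd[OF has_pd_const] by (simp add: smooth_closure.const)
next
  case (inverse g)
  have "(\<lambda>p. ((\<lambda>p. -1) p * pd v g p) * ((\<lambda>p. inverse (g p)) p * (\<lambda>p. inverse (g p)) p))
          \<in> smooth_closure"
    by (intro smooth_closure.mult smooth_closure.const smooth_closure.smooth smooth_fn_pd
          smooth_closure.inverse inverse)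
  then show ?case
    using has_pd_inverse[OF smooth_fn_has_pd[OF inverse(1)]] pd_inverse[OF inverse] inverse(2)
    by auto
next
  case (add f g)
  have h: "has_pd v (\<lambda>p. f p + g p) (\<lambda>p. pd v f p + pd v g p)"
    using add.IH by (intro has_pd_add) auto
  then show ?case using has_pd_imp_pd[OF h] add.IH by (auto intro!: smooth_closure.add)
next
  case (mult f g)
  have h: "has_pd v (\<lambda>p. f p * g p) (\<lambda>p. pd v f p * g p + f p * pd v g p)"
    using mult.IH by (intro has_pd_mult) auto
  then show ?case
    using has_pd_imp_pd[OF h] mult by (auto intro!: smooth_closure.add smooth_closure.mult)
qed

lemma pd_pd_inverse:
  assumes g: "smooth_fn g" "\<forall>p. g p \<noteq> 0"
  shows "pd v (pd w (\<lambda>p. inverse (g p))) =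
    (\<lambda>p. - pd v (pd w g) p * (inverse (g p) * inverse (g p))
         + 2 * (pd w g p * pd v g p) * (inverse (g p) * inverse (g p) * inverse (g p)))"
proof -
  have ig: "(\<lambda>p. inverse (g p)) \<in> smooth_closure"
    using g by (rule smooth_closure.inverse)
  have m: "(\<lambda>p. -1 * pd w g p) \<in> smooth_closure"
    by (intro smooth_closure.mult smooth_closure.const smooth_closure.smooth smooth_fn_pd g)
  have sq: "(\<lambda>p. inverse (g p) * inverse (g p)) \<in> smooth_closure"
    by (intro smooth_closure.mult ig)
  have "pd v (pd w (\<lambda>p. inverse (g p))) = pd v (\<lambda>p. (-1 * pd w g p) * (inverse (g p) * inverse (g p)))"
    using pd_inverse[OF g] by simp
  also have "\<dots> = (\<lambda>p. pd v (\<lambda>p. -1 * pd w g p) p * (inverse (g p) * inverse (g p))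
                      + (-1 * pd w g p) * pd v (\<lambda>p. inverse (g p) * inverse (g p)) p)"
    using m sq by (intro has_pd_imp_pd has_pd_mult) (auto dest: smooth_closure_has_pd)
  also have "pd v (\<lambda>p. -1 * pd w g p) = (\<lambda>p. -1 * pd v (pd w g) p)"
    by (intro has_pd_imp_pd has_pd_cmult smooth_fn_has_pd smooth_fn_pd g)
  also have "pd v (\<lambda>p. inverse (g p) * inverse (g p)) =
      (\<lambda>p. pd v (\<lambda>p. inverse (g p)) p * inverse (g p) + inverse (g p) * pd v (\<lambda>p. inverse (g p)) p)"
    using ig by (intro has_pd_imp_pd has_pd_mult) (auto dest: smooth_closure_has_pd)
  finally show ?thesis
    unfolding pd_inverse[OF g] by (simp add: fun_eq_iff)
qed

lemma smooth_closure_pd: "f \<in> smooth_closure \<Longrightarrow> pd v f \<in> smooth_closure"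
  using smooth_closure_has_pd by blast

lemma pd_add_closure:
  "f \<in> smooth_closure \<Longrightarrow> g \<in> smooth_closure \<Longrightarrow> pd v (\<lambda>p. f p + g p) = (\<lambda>p. pd v f p + pd v g p)"
  by (intro has_pd_imp_pd has_pd_add) (simp_all add: smooth_closure_has_pd)

lemma pd_mult_closure:
  "f \<in> smooth_closure \<Longrightarrow> g \<in> smooth_closure \<Longrightarrow>
   pd v (\<lambda>p. f p * g p) = (\<lambda>p. pd v f p * g p + f p * pd v g p)"
  by (intro has_pd_imp_pd has_pd_mult) (simp_all add: smooth_closure_has_pd)

lemma smooth_closure_pd_commute: "f \<in> smooth_closure \<Longrightarrow> pd v (pd w f) = pd w (pd v f)"
proof (induction f rule: smooth_closure.induct)
  case (smooth f)
  then show ?case by (rule pd_commute)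
next
  case (const c)
  then show ?case by (simp add: has_pd_imp_pd[OF has_pd_const])
next
  case (inverse g)
  show ?case
    unfolding pd_pd_inverse[OF inverse] using pd_commute[OF inverse(1), of v w]
    by (simp add: mult.commute)
next
  case (add f g)
  have "pd a (pd b (\<lambda>p. f p + g p)) = (\<lambda>p. pd a (pd b f) p + pd a (pd b g) p)" for a b
    using add.hyps by (simp add: pd_add_closure smooth_closure_pd)
  then show ?case using add.IH by simp
next
  case (mult f g)
  have "pd a (pd b (\<lambda>p. f p * g p)) =
    (\<lambda>p. (pd a (pd b f) p * g p + pd b f p * pd a g p) + (pd a f p * pd b g p + f p * pd a (pd b g) p))"
    for a b
    using mult.hyps
    by (simp add: pd_mult_closure pd_add_closure smooth_closure_pd smooth_closure.mult)
  then show ?case by (simp add: fun_eq_iff algebra_simps mult.IH)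
qed

lemma smooth_closure_eq: "f \<in> smooth_closure \<longleftrightarrow> smooth_fn f"
proof
  assume f: "f \<in> smooth_closure"
  have "iterpd vs f \<in> smooth_closure" for vs
    by (induction vs) (simp_all add: f smooth_closure_has_pd iterpd_def)
  then show "smooth_fn f"
    unfolding smooth_fn_def
    by (metis has_pd_differentiable smooth_closure_has_pd smooth_closure_pd_commute)
qed (rule smooth)

lemma smooth_fn_const: "smooth_fn (\<lambda>p. c)"
  using smooth_closure.const smooth_closure_eq by blast

lemma smooth_fn_add: "smooth_fn f \<Longrightarrow> smooth_fn g \<Longrightarrow> smooth_fn (\<lambda>p. f p + g p)"
  using smooth_closure.add smooth_closure_eq by blast

lemma smooth_fn_mult: "smooth_fn f \<Longrightarrow> smooth_fn g \<Longrightarrow> smooth_fn (\<lambda>p. f p * g p)"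
  using smooth_closure.mult smooth_closure_eq by blast

lemma smooth_fn_inverse: "smooth_fn g \<Longrightarrow> (\<And>p. g p \<noteq> 0) \<Longrightarrow> smooth_fn (\<lambda>p. inverse (g p))"
  using smooth_closure.inverse smooth_closure_eq by blast

lemma smooth_fn_cmult: "smooth_fn f \<Longrightarrow> smooth_fn (\<lambda>p. c * f p)"
  using smooth_fn_mult[OF smooth_fn_const] by blast

lemma smooth_fn_divide: "smooth_fn f \<Longrightarrow> smooth_fn g \<Longrightarrow> (\<And>p. g p \<noteq> 0) \<Longrightarrow> smooth_fn (\<lambda>p. f p / g p)"
  unfolding divide_inverse by (intro smooth_fn_mult smooth_fn_inverse)

lemma smooth_fn_diff: "smooth_fn f \<Longrightarrow> smooth_fn g \<Longrightarrow> smooth_fn (\<lambda>p. f p - g p)"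
  using smooth_fn_add[of f "\<lambda>p. -1 * g p"] smooth_fn_cmult[of g "-1"] by simp

lemma smooth_fn_sum: "(\<And>i. i \<in> I \<Longrightarrow> smooth_fn (f i)) \<Longrightarrow> smooth_fn (\<lambda>p. \<Sum>i\<in>I. f i p)"
proof (induction I rule: infinite_finite_induct)
  case (insert x F)
  then show ?case using smooth_fn_add[of "f x" "\<lambda>p. \<Sum>i\<in>F. f i p"] by simp
qed (simp_all add: smooth_fn_const)

lemma pd_const: "pd v (\<lambda>p. c) = (\<lambda>p. 0)"
  by (intro has_pd_imp_pd has_pd_const)

lemma pd_mult:
  "smooth_fn f \<Longrightarrow> smooth_fn g \<Longrightarrow> pd v (\<lambda>p. f p * g p) = (\<lambda>p. pd v f p * g p + f p * pd v g p)"
  by (intro has_pd_imp_pd has_pd_mult smooth_fn_has_pd)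

lemma pd_cmult: "smooth_fn f \<Longrightarrow> pd v (\<lambda>p. c * f p) = (\<lambda>p. c * pd v f p)"
  by (intro has_pd_imp_pd has_pd_cmult smooth_fn_has_pd)

lemma pd_sum:
  "(\<And>i. i \<in> I \<Longrightarrow> smooth_fn (f i)) \<Longrightarrow> pd v (\<lambda>p. \<Sum>i\<in>I. f i p) = (\<lambda>p. \<Sum>i\<in>I. pd v (f i) p)"
  by (intro has_pd_imp_pd has_pd_sum smooth_fn_has_pd) auto

lemma pd_shift: "smooth_fn f \<Longrightarrow> pd v (\<lambda>p. f (shiftp i p)) = (\<lambda>p. pd v f (shiftp i p))"
  by (intro has_pd_imp_pd has_pd_shift smooth_fn_has_pd)

lemma smooth_fn_shift:
  assumes f: "smooth_fn f"
  shows "smooth_fn (\<lambda>p. f (shiftp k p))"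
proof -
  have "iterpd vs (\<lambda>p. f (shiftp k p)) = (\<lambda>p. iterpd vs f (shiftp k p)) \<and> smooth_fn (iterpd vs f)"
    for vs
    by (induction vs) (simp_all add: iterpd_def pd_shift smooth_fn_pd f)
  moreover have "(\<lambda>y. g (shiftp k (p(v := y)))) differentiable at (p v)" if "smooth_fn g" for g p v
    using has_pd_differentiable[OF has_pd_shift[OF smooth_fn_has_pd[OF that]]] .
  ultimately show ?thesis
    unfolding smooth_fn_def[of "\<lambda>p. f (shiftp k p)"] by (simp add: pd_shift smooth_fn_pd pd_commute)
qed

section \<open>Taylor coefficients and the vertex operators\<close>

lemma smooth_fn_funpow_pd: "smooth_fn h \<Longrightarrow> smooth_fn ((pd w ^^ n) h)"
  by (induction n) (auto intro: smooth_fn_pd)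

lemma funpow_pd_cmult:
  "smooth_fn h \<Longrightarrow> (pd w ^^ n) (\<lambda>p. c * h p) = (\<lambda>p. c * (pd w ^^ n) h p)"
  by (induction n) (simp_all add: pd_cmult smooth_fn_funpow_pd)

lemma funpow_pd_sum:
  "(\<And>a. a \<in> A \<Longrightarrow> smooth_fn (H a)) \<Longrightarrow>
   (pd w ^^ n) (\<lambda>p. \<Sum>a\<in>A. H a p) = (\<lambda>p. \<Sum>a\<in>A. (pd w ^^ n) (H a) p)"
  by (induction n) (simp_all add: pd_sum smooth_fn_funpow_pd)

lemma pd_funpow_pd: "smooth_fn h \<Longrightarrow> pd u ((pd w ^^ n) h) = (pd w ^^ n) (pd u h)"
proof (induction n)
  case (Suc n)
  then show ?case using pd_commute[OF smooth_fn_funpow_pd[OF Suc.prems], of u w] by simp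
qed simp

lemma funpow_pd_zero: "(pd w ^^ n) (\<lambda>p. 0) = (\<lambda>p. 0)"
  by (induction n) (simp_all add: pd_const)

definition taylor_coeff :: "var \<Rightarrow> nat \<Rightarrow> fn \<Rightarrow> fn" where
  "taylor_coeff w n h = (\<lambda>p. (pd w ^^ n) h p / fact n)"

lemma smooth_fn_taylor_coeff: "smooth_fn h \<Longrightarrow> smooth_fn (taylor_coeff w n h)"
  unfolding taylor_coeff_def
  by (intro smooth_fn_divide smooth_fn_funpow_pd smooth_fn_const) simp_all

lemma taylor_coeff_0 [simp]: "taylor_coeff w 0 h = h"
  unfolding taylor_coeff_def by simp

lemma pd_taylor_coeff:
  assumes "smooth_fn h"
  shows "pd w (taylor_coeff w n h) = (\<lambda>p. of_nat (Suc n) * taylor_coeff w (Suc n) h p)"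
proof -
  have "pd w (taylor_coeff w n h) = pd w (\<lambda>p. inverse (fact n) * (pd w ^^ n) h p)"
    unfolding taylor_coeff_def by (simp add: field_simps)
  also have "\<dots> = (\<lambda>p. inverse (fact n) * (pd w ^^ Suc n) h p)"
    using pd_cmult[OF smooth_fn_funpow_pd[OF assms]] by simp
  also have "\<dots> = (\<lambda>p. of_nat (Suc n) * taylor_coeff w (Suc n) h p)"
    unfolding taylor_coeff_def by (rule ext) (simp add: field_simps fact_Suc del: of_nat_Suc)
  finally show ?thesis .
qed

text \<open>The derivative of a Cauchy product, written for coefficients of Taylor type
  (whose derivatives are index shifts).\<close>

lemma convolution_derivative:
  fixes X Y :: "nat \<Rightarrow> complex"
  shows "(\<Sum>r\<le>n. of_nat (Suc r) * X (Suc r) * Y (n - r) + X r * (of_nat (Suc (n - r)) * Y (Suc (n - r))))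
       = of_nat (Suc n) * (\<Sum>r\<le>Suc n. X r * Y (Suc n - r))"
proof -
  have 1: "(\<Sum>r\<le>Suc n. of_nat r * X r * Y (Suc n - r)) =
      (\<Sum>r\<le>n. of_nat (Suc r) * X (Suc r) * Y (n - r))"
    by (simp only: sum.atMost_Suc_shift of_nat_0 mult_zero_left add_0 diff_Suc_Suc)
  have 2: "(\<Sum>r\<le>Suc n. of_nat (Suc n - r) * X r * Y (Suc n - r)) =
      (\<Sum>r\<le>n. X r * (of_nat (Suc (n - r)) * Y (Suc (n - r))))"
    by (simp only: sum.atMost_Suc diff_self_eq_0 of_nat_0 mult_zero_left add_0_right)
      (intro sum.cong refl, simp only: atMost_iff Suc_diff_le mult_ac)
  have "(\<Sum>r\<le>Suc n. of_nat r * X r * Y (Suc n - r) + of_nat (Suc n - r) * X r * Y (Suc n - r)) =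
      (\<Sum>r\<le>Suc n. of_nat (Suc n) * (X r * Y (Suc n - r)))"
  proof (intro sum.cong refl)
    fix r assume "r \<in> {..Suc n}"
    then have "of_nat r + of_nat (Suc n - r) = (of_nat (Suc n) :: complex)"
      by (simp del: of_nat_Suc add: of_nat_add[symmetric])
    then show "of_nat r * X r * Y (Suc n - r) + of_nat (Suc n - r) * X r * Y (Suc n - r) =
        of_nat (Suc n) * (X r * Y (Suc n - r))"
      by (metis distrib_right mult.assoc)
  qed
  then show ?thesis
    by (simp only: sum.distrib 1 2 sum_distrib_left)
qed

lemma taylor_coeff_mult:
  assumes f: "smooth_fn f" and g: "smooth_fn g"
  shows "taylor_coeff w n (\<lambda>p. f p * g p) =
    (\<lambda>p. \<Sum>r\<le>n. taylor_coeff w r f p * taylor_coeff w (n - r) g p)"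
proof (induction n)
  case 0
  then show ?case by simp
next
  case (Suc n)
  have sm: "smooth_fn (taylor_coeff w r f)" "smooth_fn (taylor_coeff w r g)" for r
    using f g smooth_fn_taylor_coeff by auto
  have "of_nat (Suc n) * taylor_coeff w (Suc n) (\<lambda>p. f p * g p) p =
      pd w (taylor_coeff w n (\<lambda>p. f p * g p)) p" for p
    using pd_taylor_coeff[OF smooth_fn_mult[OF f g]] by simp
  also have "\<dots>p = (\<Sum>r\<le>n. pd w (\<lambda>p. taylor_coeff w r f p * taylor_coeff w (n - r) g p) p)" for p
    unfolding Suc by (subst pd_sum) (simp_all add: smooth_fn_mult sm)
  also have "\<dots>p = (\<Sum>r\<le>n. of_nat (Suc r) * taylor_coeff w (Suc r) f p * taylor_coeff w (n - r) g p
      + taylor_coeff w r f p * (of_nat (Suc (n - r)) * taylor_coeff w (Suc (n - r)) g p))" for p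
    by (simp add: pd_mult sm pd_taylor_coeff f g)
  also have "\<dots>p = of_nat (Suc n) * (\<Sum>r\<le>Suc n. taylor_coeff w r f p * taylor_coeff w (Suc n - r) g p)"
    for p
    by (rule convolution_derivative)
  finally show ?case
    by (intro ext) (simp only: mult_cancel_left of_nat_eq_0_iff nat.distinct simp_thms)
qed

definition scaled_taylor_coeff :: "complex \<Rightarrow> var \<Rightarrow> nat \<Rightarrow> fn \<Rightarrow> fn" where
  "scaled_taylor_coeff c w n h = (\<lambda>p. c ^ n * taylor_coeff w n h p)"

lemma smooth_fn_scaled_taylor_coeff: "smooth_fn h \<Longrightarrow> smooth_fn (scaled_taylor_coeff c w n h)"
  unfolding scaled_taylor_coeff_def by (intro smooth_fn_cmult smooth_fn_taylor_coeff)

lemma scaled_taylor_coeff_0 [simp]: "scaled_taylor_coeff c w 0 h = h"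
  unfolding scaled_taylor_coeff_def by simp

lemma scaled_taylor_coeff_mult:
  assumes "smooth_fn f" and "smooth_fn g"
  shows "scaled_taylor_coeff c w n (\<lambda>p. f p * g p) =
    (\<lambda>p. \<Sum>r\<le>n. scaled_taylor_coeff c w r f p * scaled_taylor_coeff c w (n - r) g p)"
proof -
  have "c ^ n * (taylor_coeff w r f p * taylor_coeff w (n - r) g p) =
      c ^ r * taylor_coeff w r f p * (c ^ (n - r) * taylor_coeff w (n - r) g p)"
    if "r \<in> {..n}" for r p
  proof -
    have "c ^ n = c ^ r * c ^ (n - r)" using that by (simp add: power_add[symmetric])
    then show ?thesis by (simp only: mult_ac)
  qed
  then show ?thesis
    unfolding scaled_taylor_coeff_def taylor_coeff_mult[OF assms] sum_distrib_left
    by (intro ext sum.cong refl) simp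
qed

lemma scaled_taylor_coeff_sum:
  "(\<And>a. a \<in> A \<Longrightarrow> smooth_fn (H a)) \<Longrightarrow>
   scaled_taylor_coeff c w n (\<lambda>p. \<Sum>a\<in>A. H a p) = (\<lambda>p. \<Sum>a\<in>A. scaled_taylor_coeff c w n (H a) p)"
  unfolding scaled_taylor_coeff_def taylor_coeff_def
  by (simp add: funpow_pd_sum sum_distrib_left sum_divide_distrib)

lemma pd_scaled_taylor_coeff:
  assumes "smooth_fn h"
  shows "pd u (scaled_taylor_coeff c w n h) = scaled_taylor_coeff c w n (pd u h)"
proof -
  have e: "scaled_taylor_coeff c w n h' = (\<lambda>p. (c ^ n / fact n) * (pd w ^^ n) h' p)" for h'
    unfolding scaled_taylor_coeff_def taylor_coeff_def by simp
  show ?thesis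
    unfolding e pd_cmult[OF smooth_fn_funpow_pd[OF assms]] pd_funpow_pd[OF assms] ..
qed

definition dominated :: "(nat \<Rightarrow> nat) \<Rightarrow> nat \<Rightarrow> (nat \<Rightarrow> nat) set" where
  "dominated m j = {a. \<forall>i. (1 \<le> i \<and> i \<le> j \<longrightarrow> a i \<le> m i) \<and> (\<not> (1 \<le> i \<and> i \<le> j) \<longrightarrow> a i = 0)}"

lemma finite_dominated: "finite (dominated m j)"
proof -
  have "inj_on (\<lambda>a. restrict a {1..j}) (dominated m j)"
  proof (rule inj_onI, rule ext)
    fix a b i assume "a \<in> dominated m j" "b \<in> dominated m j"
      and "restrict a {1..j} = restrict b {1..j}"
    then show "a i = b i"
      unfolding dominated_def by (cases "1 \<le> i \<and> i \<le> j") (auto dest: fun_cong[where x = i])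
  qed
  moreover have "(\<lambda>a. restrict a {1..j}) ` dominated m j \<subseteq> (\<Pi>\<^sub>E i\<in>{1..j}. {..m i})"
    unfolding dominated_def by auto
  then have "finite ((\<lambda>a. restrict a {1..j}) ` dominated m j)"
    by (rule finite_subset) (intro finite_PiE; simp)
  ultimately show ?thesis using finite_imageD by blast
qed

lemma dominated_0: "dominated m 0 = {\<lambda>i. 0}"
  unfolding dominated_def by auto

lemma dominated_le: "a \<in> dominated m j \<Longrightarrow> a l \<le> m l"
  unfolding dominated_def by (cases "1 \<le> l \<and> l \<le> j") auto

fun multi_taylor_coeff :: "(nat \<Rightarrow> complex) \<Rightarrow> (nat \<Rightarrow> var) \<Rightarrow> (nat \<Rightarrow> nat) \<Rightarrow> nat \<Rightarrow> fn \<Rightarrow> fn" where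
  "multi_taylor_coeff \<alpha> v m 0 g = g"
| "multi_taylor_coeff \<alpha> v m (Suc i) g =
     scaled_taylor_coeff (\<alpha> (Suc i)) (v (Suc i)) (m (Suc i)) (multi_taylor_coeff \<alpha> v m i g)"

lemma smooth_fn_multi_taylor_coeff: "smooth_fn h \<Longrightarrow> smooth_fn (multi_taylor_coeff \<alpha> v m j h)"
  by (induction j) (auto intro: smooth_fn_scaled_taylor_coeff)

lemma multi_taylor_coeff_cong:
  "(\<And>i. 1 \<le> i \<Longrightarrow> i \<le> j \<Longrightarrow> m i = m' i) \<Longrightarrow> multi_taylor_coeff \<alpha> v m j h = multi_taylor_coeff \<alpha> v m' j h"
  by (induction j) auto

lemma multi_taylor_coeff_truncate:
  "i \<le> j \<Longrightarrow> (\<And>l. i < l \<Longrightarrow> l \<le> j \<Longrightarrow> m l = 0) \<Longrightarrow>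
   multi_taylor_coeff \<alpha> v m j h = multi_taylor_coeff \<alpha> v m i h"
  by (induction j) (auto simp: le_Suc_eq)

lemma pd_multi_taylor_coeff:
  "smooth_fn h \<Longrightarrow> pd u (multi_taylor_coeff \<alpha> v m j h) = multi_taylor_coeff \<alpha> v m j (pd u h)"
  by (induction j) (auto simp: pd_scaled_taylor_coeff smooth_fn_multi_taylor_coeff)

lemma smooth_fn_dmi: "smooth_fn h \<Longrightarrow> smooth_fn (dmi v m j h)"
  by (induction j) (auto intro: smooth_fn_funpow_pd)

lemma multi_taylor_coeff_eq_dmi:
  "smooth_fn h \<Longrightarrow>
   multi_taylor_coeff \<alpha> v m j h = (\<lambda>p. (\<Prod>i=1..j. \<alpha> i ^ m i / fact (m i)) * dmi v m j h p)"
proof (induction j)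
  case (Suc j)
  have "{1..Suc j} = insert (Suc j) {1..j}" by auto
  then show ?case
    unfolding multi_taylor_coeff.simps Suc.IH[OF Suc.prems] scaled_taylor_coeff_def taylor_coeff_def
      funpow_pd_cmult[OF smooth_fn_dmi[OF Suc.prems]]
    by (simp add: field_simps)
qed simp

lemma bij_betw_dominated_Suc:
  "bij_betw (\<lambda>(a, r). a(Suc j := r)) (dominated m j \<times> {..m (Suc j)}) (dominated m (Suc j))"
proof (rule bij_betw_byWitness[where f' = "\<lambda>a. (a(Suc j := 0), a (Suc j))"], goal_cases)
  case 1
  show ?case by (auto simp: dominated_def)
next
  case 2
  show ?case by auto
next
  case 3
  have "a(Suc j := r) \<in> dominated m (Suc j)" if a: "a \<in> dominated m j" and r: "r \<le> m (Suc j)" for a r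
    unfolding dominated_def mem_Collect_eq
  proof
    fix i
    show "(1 \<le> i \<and> i \<le> Suc j \<longrightarrow> (a(Suc j := r)) i \<le> m i) \<and>
        (\<not> (1 \<le> i \<and> i \<le> Suc j) \<longrightarrow> (a(Suc j := r)) i = 0)"
      using a r unfolding dominated_def by (cases "i = Suc j") (simp_all add: le_Suc_eq)
  qed
  then show ?case by auto
next
  case 4
  show ?case by (auto simp: dominated_def)
qed

lemma multi_taylor_coeff_mult:
  assumes f: "smooth_fn f" and g: "smooth_fn g"
  shows "multi_taylor_coeff \<alpha> v m j (\<lambda>p. f p * g p) =
    (\<lambda>p. \<Sum>a\<in>dominated m j. multi_taylor_coeff \<alpha> v a j f p * multi_taylor_coeff \<alpha> v (\<lambda>i. m i - a i) j g p)"
proof (induction j)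
  case 0
  then show ?case by (simp add: dominated_0)
next
  case (Suc j)
  let ?S = "scaled_taylor_coeff (\<alpha> (Suc j)) (v (Suc j))"
  let ?F = "\<lambda>a. multi_taylor_coeff \<alpha> v a j f" and ?G = "\<lambda>a. multi_taylor_coeff \<alpha> v (\<lambda>i. m i - a i) j g"
  have sm: "smooth_fn (?F a)" "smooth_fn (?G a)" for a
    using f g smooth_fn_multi_taylor_coeff by auto
  have "multi_taylor_coeff \<alpha> v (a(Suc j := r)) j f = ?F a"
    "multi_taylor_coeff \<alpha> v (\<lambda>i. m i - (a(Suc j := r)) i) j g = ?G a" for a r
    by (auto intro: multi_taylor_coeff_cong)
  then have lift: "?S r (?F a) = multi_taylor_coeff \<alpha> v (a(Suc j := r)) (Suc j) f"
    "?S (m (Suc j) - r) (?G a) = multi_taylor_coeff \<alpha> v (\<lambda>i. m i - (a(Suc j := r)) i) (Suc j) g"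
    for a r
    by simp_all
  have "multi_taylor_coeff \<alpha> v m (Suc j) (\<lambda>p. f p * g p) =
      ?S (m (Suc j)) (\<lambda>p. \<Sum>a\<in>dominated m j. ?F a p * ?G a p)"
    using Suc by simp
  also have "\<dots> = (\<lambda>p. \<Sum>a\<in>dominated m j. \<Sum>r\<le>m (Suc j). ?S r (?F a) p * ?S (m (Suc j) - r) (?G a) p)"
    by (simp add: scaled_taylor_coeff_sum smooth_fn_mult sm scaled_taylor_coeff_mult)
  also have "\<dots> = (\<lambda>p. \<Sum>(a, r)\<in>dominated m j \<times> {..m (Suc j)}. ?S r (?F a) p * ?S (m (Suc j) - r) (?G a) p)"
    by (simp add: sum.cartesian_product)
  also have "\<dots> = (\<lambda>p. \<Sum>a\<in>dominated m (Suc j).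
      multi_taylor_coeff \<alpha> v a (Suc j) f p * multi_taylor_coeff \<alpha> v (\<lambda>i. m i - a i) (Suc j) g p)"
    unfolding lift
    by (rule ext, subst sum.reindex_bij_betw[OF bij_betw_dominated_Suc, symmetric])
      (simp add: case_prod_unfold)
  finally show ?case .
qed

definition weight :: "nat \<Rightarrow> (nat \<Rightarrow> nat) \<Rightarrow> nat" where
  "weight j a = (\<Sum>l=1..j. l * a l)"

lemma MI_iff: "m \<in> MI j \<longleftrightarrow> (\<forall>i. m i \<noteq> 0 \<longrightarrow> 1 \<le> i \<and> i \<le> j) \<and> weight j m = j"
  unfolding MI_def weight_def by auto

lemma weight_extend:
  assumes "\<And>l. a l \<noteq> 0 \<Longrightarrow> l \<le> K" and "K \<le> K'"
  shows "weight K' a = weight K a"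
  unfolding weight_def
proof (rule sum.mono_neutral_right)
  show "\<forall>l\<in>{1..K'} - {1..K}. l * a l = 0"
  proof
    fix l assume "l \<in> {1..K'} - {1..K}"
    then have "\<not> l \<le> K" by auto
    then show "l * a l = 0" using assms(1)[of l] by auto
  qed
qed (use assms(2) in auto)

lemma le_weight: "1 \<le> l \<Longrightarrow> l \<le> j \<Longrightarrow> l * a l \<le> weight j a"
  unfolding weight_def by (rule member_le_sum) auto

lemma le_weight_if_nonzero: "a l \<noteq> 0 \<Longrightarrow> 1 \<le> l \<Longrightarrow> l \<le> j \<Longrightarrow> l \<le> weight j a"
  using le_weight[of l j a] by (cases "a l") auto

lemma MI_subset_dominated: "MI j \<subseteq> dominated (\<lambda>_. j) j"
proof
  fix m assume m: "m \<in> MI j"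
  have "m i \<le> j" if "1 \<le> i" "i \<le> j" for i
  proof -
    have "m i \<le> i * m i" using that by simp
    also have "\<dots> \<le> weight j m" by (rule le_weight) (use that in auto)
    finally show ?thesis using m unfolding MI_iff by simp
  qed
  then show "m \<in> dominated (\<lambda>_. j) j" using m unfolding MI_iff dominated_def by auto
qed

lemma finite_MI: "finite (MI j)"
  using finite_subset[OF MI_subset_dominated finite_dominated] .

lemma MI_0: "MI 0 = {\<lambda>_. 0}"
  unfolding MI_def by auto

lemma dominated_support: "a \<in> dominated m j \<Longrightarrow> a l \<noteq> 0 \<Longrightarrow> 1 \<le> l \<and> l \<le> j"
  unfolding dominated_def by (cases "1 \<le> l \<and> l \<le> j") auto

lemma weight_MI: "a \<in> MI i \<Longrightarrow> i \<le> j \<Longrightarrow> weight j a = i"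
  unfolding MI_iff using weight_extend[of a i j] by simp

lemma MI_of_weight:
  assumes "\<And>l. a l \<noteq> 0 \<Longrightarrow> 1 \<le> l \<and> l \<le> i" and "i \<le> j" and "weight j a = i"
  shows "a \<in> MI i"
  unfolding MI_iff using assms weight_extend[of a i j] by simp

lemma MI_add:
  assumes i: "i \<le> j" and a: "a \<in> MI i" and b: "b \<in> MI (j - i)"
  shows "(\<lambda>l. a l + b l) \<in> MI j" and "a \<in> dominated (\<lambda>l. a l + b l) j"
proof -
  have "weight j (\<lambda>l. a l + b l) = weight j a + weight j b"
    unfolding weight_def by (simp add: algebra_simps sum.distrib)
  also have "\<dots> = j"
    using weight_MI[OF a i] weight_MI[OF b] i by simp
  finally have "weight j (\<lambda>l. a l + b l) = j" .
  moreover have "1 \<le> l \<and> l \<le> j" if "a l + b l \<noteq> 0" for l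
    using that a b i unfolding MI_iff by (metis add_is_0 diff_le_self le_trans)
  ultimately show "(\<lambda>l. a l + b l) \<in> MI j"
    unfolding MI_iff by blast
  show "a \<in> dominated (\<lambda>l. a l + b l) j"
    using a i unfolding MI_iff dominated_def by auto
qed

lemma MI_diff:
  assumes m: "m \<in> MI j" and a: "a \<in> dominated m j"
  shows "weight j a \<le> j" and "a \<in> MI (weight j a)" and "(\<lambda>l. m l - a l) \<in> MI (j - weight j a)"
proof -
  have am: "a l \<le> m l" for l
    using a by (rule dominated_le)
  have wm: "weight j m = j"
    using m by (simp add: MI_iff)
  have "weight j a \<le> weight j m"
    unfolding weight_def by (intro sum_mono mult_le_mono2 am)
  then show wa: "weight j a \<le> j"
    using wm by simp
  have "(\<Sum>l=1..j. l * (m l - a l)) = (\<Sum>l=1..j. l * m l - l * a l)"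
    by (simp add: diff_mult_distrib2)
  also have "\<dots> = (\<Sum>l=1..j. l * m l) - (\<Sum>l=1..j. l * a l)"
    by (rule sum_subtractf_nat) (auto intro: mult_le_mono2 am)
  finally have wd: "weight j (\<lambda>l. m l - a l) = j - weight j a"
    using wm unfolding weight_def by simp
  show "a \<in> MI (weight j a)"
  proof (rule MI_of_weight[OF _ wa refl])
    fix l assume "a l \<noteq> 0"
    then show "1 \<le> l \<and> l \<le> weight j a"
      using dominated_support[OF a] le_weight_if_nonzero by blast
  qed
  show "(\<lambda>l. m l - a l) \<in> MI (j - weight j a)"
  proof (rule MI_of_weight[OF _ _ wd])
    fix l assume l: "m l - a l \<noteq> 0"
    then have "1 \<le> l \<and> l \<le> j"
      using m unfolding MI_iff by auto
    then show "1 \<le> l \<and> l \<le> j - weight j a"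
      using le_weight_if_nonzero[of "\<lambda>l. m l - a l" l j] l wd by simp
  qed simp
qed

text \<open>This splitting of multi-indices is what makes the vertex operators multiplicative.\<close>

lemma bij_betw_MI_split:
  "bij_betw (\<lambda>(m, a). (weight j a, a, \<lambda>l. m l - a l))
     (Sigma (MI j) (\<lambda>m. dominated m j)) (Sigma {..j} (\<lambda>i. MI i \<times> MI (j - i)))"
proof (rule bij_betw_byWitness[where f' = "\<lambda>(i, a, b). (\<lambda>l. a l + b l, a)"], goal_cases)
  case 1
  show ?case
    by (clarsimp simp: fun_eq_iff) (metis dominated_le le_add_diff_inverse)
next
  case 2
  show ?case
    by (clarsimp simp: weight_MI)
next
  case 3
  show ?case
    using MI_diff by fastforce
next
  case 4
  show ?case
    using MI_add by fastforce
qed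

text \<open>The coefficient of z^-j in g(t - [z^-1]) (for \<alpha> i = -1/i, v = T) or of z^j in
  g(tbar + [z]) (for \<alpha> i = 1/i, v = Tb), as a sum over the multi-indices of weight j.\<close>

definition vertex_coeff :: "(nat \<Rightarrow> complex) \<Rightarrow> (nat \<Rightarrow> var) \<Rightarrow> nat \<Rightarrow> fn \<Rightarrow> fn" where
  "vertex_coeff \<alpha> v j h = (\<lambda>p. \<Sum>m\<in>MI j. multi_taylor_coeff \<alpha> v m j h p)"

lemma smooth_fn_vertex_coeff: "smooth_fn h \<Longrightarrow> smooth_fn (vertex_coeff \<alpha> v j h)"
  unfolding vertex_coeff_def by (intro smooth_fn_sum smooth_fn_multi_taylor_coeff)

lemma pd_vertex_coeff: "smooth_fn h \<Longrightarrow> pd u (vertex_coeff \<alpha> v j h) = vertex_coeff \<alpha> v j (pd u h)"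
  unfolding vertex_coeff_def by (simp add: pd_sum smooth_fn_multi_taylor_coeff pd_multi_taylor_coeff)

lemma vertex_coeff_0 [simp]: "vertex_coeff \<alpha> v 0 h = h"
  unfolding vertex_coeff_def MI_0 by simp

lemma vertex_coeff_mult:
  assumes f: "smooth_fn f" and g: "smooth_fn g"
  shows "vertex_coeff \<alpha> v j (\<lambda>p. f p * g p) =
    (\<lambda>p. \<Sum>i\<le>j. vertex_coeff \<alpha> v i f p * vertex_coeff \<alpha> v (j - i) g p)"
proof
  fix p
  let ?D = "\<lambda>a i h. multi_taylor_coeff \<alpha> v a i h p"
  have "vertex_coeff \<alpha> v j (\<lambda>p. f p * g p) p =
      (\<Sum>m\<in>MI j. \<Sum>a\<in>dominated m j. ?D a j f * ?D (\<lambda>i. m i - a i) j g)"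
    unfolding vertex_coeff_def multi_taylor_coeff_mult[OF f g] ..
  also have "\<dots> = (\<Sum>(m, a)\<in>Sigma (MI j) (\<lambda>m. dominated m j). ?D a j f * ?D (\<lambda>i. m i - a i) j g)"
    by (intro sum.Sigma finite_MI ballI finite_dominated)
  also have "\<dots> = (\<Sum>(i, a, b)\<in>Sigma {..j} (\<lambda>i. MI i \<times> MI (j - i)). ?D a j f * ?D b j g)"
    by (subst sum.reindex_bij_betw[OF bij_betw_MI_split, symmetric]) (simp add: case_prod_unfold)
  also have "\<dots> = (\<Sum>(i, a, b)\<in>Sigma {..j} (\<lambda>i. MI i \<times> MI (j - i)). ?D a i f * ?D b (j - i) g)"
  proof (rule sum.cong[OF refl])
    fix x assume "x \<in> Sigma {..j} (\<lambda>i. MI i \<times> MI (j - i))"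
    then obtain i a b where x: "x = (i, a, b)" and i: "i \<le> j" and a: "a \<in> MI i" and b: "b \<in> MI (j - i)"
      by auto
    have "multi_taylor_coeff \<alpha> v a j f = multi_taylor_coeff \<alpha> v a i f"
      by (rule multi_taylor_coeff_truncate) (use i a in \<open>auto simp: MI_iff\<close>)
    moreover have "multi_taylor_coeff \<alpha> v b j g = multi_taylor_coeff \<alpha> v b (j - i) g"
      by (rule multi_taylor_coeff_truncate) (use b in \<open>auto simp: MI_iff\<close>)
    ultimately show "(case x of (i, a, b) \<Rightarrow> ?D a j f * ?D b j g) =
        (case x of (i, a, b) \<Rightarrow> ?D a i f * ?D b (j - i) g)"
      unfolding x by simp
  qed
  also have "\<dots> = (\<Sum>i\<le>j. \<Sum>(a, b)\<in>MI i \<times> MI (j - i). ?D a i f * ?D b (j - i) g)"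
    by (subst sum.Sigma[symmetric]) (auto intro!: finite_cartesian_product finite_MI)
  also have "\<dots> = (\<Sum>i\<le>j. vertex_coeff \<alpha> v i f p * vertex_coeff \<alpha> v (j - i) g p)"
    unfolding vertex_coeff_def sum_product sum.cartesian_product ..
  finally show "vertex_coeff \<alpha> v j (\<lambda>p. f p * g p) p =
      (\<Sum>i\<le>j. vertex_coeff \<alpha> v i f p * vertex_coeff \<alpha> v (j - i) g p)" .
qed

lemma Gc_eq_vertex_coeff:
  "smooth_fn h \<Longrightarrow> Gc j h = vertex_coeff (\<lambda>i. complex_of_real (- 1 / real i)) T j h"
  unfolding Gc_def vertex_coeff_def by (simp add: multi_taylor_coeff_eq_dmi)

lemma Gbc_eq_vertex_coeff:
  "smooth_fn h \<Longrightarrow> Gbc j h = (\<lambda>p. vertex_coeff (\<lambda>i. complex_of_real (1 / real i)) Tb j h (shiftp 1 p))"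
  unfolding Gbc_def vertex_coeff_def by (simp add: multi_taylor_coeff_eq_dmi)

text \<open>Coefficientwise form of d(G(z)\<tau>/\<tau>) = (G(z)(d\<tau>/\<tau>) - d\<tau>/\<tau>) G(z)\<tau>/\<tau>, valid as G(z) is
  multiplicative and commutes with d.\<close>

lemma pd_vertex_coeff_quotient:
  assumes t: "smooth_fn \<tau>" and nz: "\<And>p. \<tau> p \<noteq> 0"
  shows "pd u (\<lambda>p. vertex_coeff \<alpha> v j \<tau> (shiftp k p) / \<tau> p) =
    (\<lambda>p. \<Sum>i\<le>j. (vertex_coeff \<alpha> v i (\<lambda>q. pd u \<tau> q / \<tau> q) (shiftp k p) - (if i = 0 then pd u \<tau> p / \<tau> p else 0))
             * (vertex_coeff \<alpha> v (j - i) \<tau> (shiftp k p) / \<tau> p))"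
proof -
  define f where "f = (\<lambda>q. pd u \<tau> q / \<tau> q)"
  let ?G = "\<lambda>i h p. vertex_coeff \<alpha> v i h (shiftp k p)"
  have f: "smooth_fn f" unfolding f_def by (intro smooth_fn_divide smooth_fn_pd t nz)
  have pt: "pd u \<tau> = (\<lambda>p. f p * \<tau> p)" unfolding f_def using nz by (auto intro!: ext)
  have "pd u (\<lambda>p. ?G j \<tau> p * inverse (\<tau> p)) =
      (\<lambda>p. pd u (vertex_coeff \<alpha> v j \<tau>) (shiftp k p) * inverse (\<tau> p)
         + ?G j \<tau> p * (- pd u \<tau> p * (inverse (\<tau> p) * inverse (\<tau> p))))"
    by (intro has_pd_imp_pd has_pd_mult has_pd_shift has_pd_inverse smooth_fn_has_pd
        smooth_fn_vertex_coeff t nz)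
  also have "\<dots> = (\<lambda>p. (\<Sum>i\<le>j. ?G i f p * ?G (j - i) \<tau> p) * inverse (\<tau> p) - f p * (?G j \<tau> p * inverse (\<tau> p)))"
    unfolding pd_vertex_coeff[OF t] pt vertex_coeff_mult[OF f t] using nz
    by (auto intro!: ext simp: field_simps)
  also have "\<dots> = (\<lambda>p. \<Sum>i\<le>j. (?G i f p - (if i = 0 then f p else 0)) * (?G (j - i) \<tau> p / \<tau> p))"
  proof
    fix p
    have "(\<Sum>i\<le>j. (?G i f p - (if i = 0 then f p else 0)) * (?G (j - i) \<tau> p / \<tau> p)) =
        (\<Sum>i\<le>j. ?G i f p * (?G (j - i) \<tau> p / \<tau> p)) -
        (\<Sum>i\<le>j. if i = 0 then f p * (?G j \<tau> p / \<tau> p) else 0)"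
      unfolding sum_subtractf[symmetric] by (intro sum.cong refl) (auto simp: algebra_simps)
    then show "(\<Sum>i\<le>j. ?G i f p * ?G (j - i) \<tau> p) * inverse (\<tau> p) - f p * (?G j \<tau> p * inverse (\<tau> p)) =
        (\<Sum>i\<le>j. (?G i f p - (if i = 0 then f p else 0)) * (?G (j - i) \<tau> p / \<tau> p))"
      by (simp add: sum_distrib_right divide_inverse mult.assoc)
  qed
  finally show ?thesis unfolding f_def divide_inverse .
qed

lemma sdiv_eqI:
  assumes d0: "\<And>p. den 0 p \<noteq> 0" and e: "\<And>j p. num j p = (\<Sum>i\<le>j. q i p * den (j - i) p)"
  shows "sdiv num den = q"
  unfolding sdiv_def
proof (rule the_equality)
  show "\<forall>j p. num j p = (\<Sum>i\<le>j. q i p * den (j - i) p)" using e by blast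
next
  fix q' assume q': "\<forall>j p. num j p = (\<Sum>i\<le>j. q' i p * den (j - i) p)"
  have split: "(\<Sum>i\<le>j. r i p * den (j - i) p) = r j p * den 0 p + (\<Sum>i<j. r i p * den (j - i) p)"
    for r :: "nat \<Rightarrow> fn" and j p
    by (simp add: lessThan_Suc_atMost[symmetric])
  have "q' j p = q j p" for j p
  proof (induction j arbitrary: p rule: less_induct)
    case (less j)
    then have "(\<Sum>i<j. q' i p * den (j - i) p) = (\<Sum>i<j. q i p * den (j - i) p)"
      by (intro sum.cong) auto
    moreover have "num j p = q' j p * den 0 p + (\<Sum>i<j. q' i p * den (j - i) p)"
      using q' split by simp
    moreover have "num j p = q j p * den 0 p + (\<Sum>i<j. q i p * den (j - i) p)"
      using e split by simp
    ultimately have "q' j p * den 0 p + (\<Sum>i<j. q i p * den (j - i) p) =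
        q j p * den 0 p + (\<Sum>i<j. q i p * den (j - i) p)"
      by metis
    then have "q' j p * den 0 p = q j p * den 0 p"
      by (rule add_right_imp_eq)
    then show ?case using d0[of p] by (metis mult_cancel_right)
  qed
  then show "q' = q" by (auto intro!: ext)
qed

lemma Wop_nonpos: "Wop \<tau> (- int j) = (\<lambda>p. Gc j \<tau> p / \<tau> p)"
  unfolding Wop_def by simp

lemma Wbop_nonneg: "Wbop \<tau> (int j) = (\<lambda>p. Gbc j \<tau> p / \<tau> p)"
  unfolding Wbop_def by simp

lemma sdiv_pd_Wop:
  assumes t: "smooth_fn \<tau>" and nz: "\<And>p. \<tau> p \<noteq> 0"
  shows "sdiv (\<lambda>j p. pd u (Wop \<tau> (- int j)) p) (\<lambda>j. Wop \<tau> (- int j))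
     = (\<lambda>j p. Gc j (\<lambda>q. pd u \<tau> q / \<tau> q) p - (if j = 0 then pd u \<tau> p / \<tau> p else 0))"
proof (rule sdiv_eqI)
  have f: "smooth_fn (\<lambda>q. pd u \<tau> q / \<tau> q)"
    by (intro smooth_fn_divide smooth_fn_pd t nz)
  have W: "Wop \<tau> (- int i) = (\<lambda>p. vertex_coeff (\<lambda>i. complex_of_real (- 1 / real i)) T i \<tau> (shiftp 0 p) / \<tau> p)"
    for i
    unfolding Wop_nonpos Gc_eq_vertex_coeff[OF t] by simp
  show "pd u (Wop \<tau> (- int j)) p = (\<Sum>i\<le>j. (Gc i (\<lambda>q. pd u \<tau> q / \<tau> q) p
      - (if i = 0 then pd u \<tau> p / \<tau> p else 0)) * Wop \<tau> (- int (j - i)) p)" for j p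
    unfolding W pd_vertex_coeff_quotient[OF t nz] Gc_eq_vertex_coeff[OF f] by simp
  show "Wop \<tau> (- int 0) p \<noteq> 0" for p
    unfolding Wop_nonpos Gc_eq_vertex_coeff[OF t] using nz by simp
qed

lemma sdiv_pd_Wbop:
  assumes t: "smooth_fn \<tau>" and nz: "\<And>p. \<tau> p \<noteq> 0"
  shows "sdiv (\<lambda>j p. pd u (Wbop \<tau> (int j)) p) (\<lambda>j. Wbop \<tau> (int j))
     = (\<lambda>j p. Gbc j (\<lambda>q. pd u \<tau> q / \<tau> q) p - (if j = 0 then pd u \<tau> p / \<tau> p else 0))"
proof (rule sdiv_eqI)
  have f: "smooth_fn (\<lambda>q. pd u \<tau> q / \<tau> q)"
    by (intro smooth_fn_divide smooth_fn_pd t nz)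
  have W: "Wbop \<tau> (int i) = (\<lambda>p. vertex_coeff (\<lambda>i. complex_of_real (1 / real i)) Tb i \<tau> (shiftp 1 p) / \<tau> p)"
    for i
    unfolding Wbop_nonneg Gbc_eq_vertex_coeff[OF t] by simp
  show "pd u (Wbop \<tau> (int j)) p = (\<Sum>i\<le>j. (Gbc i (\<lambda>q. pd u \<tau> q / \<tau> q) p
      - (if i = 0 then pd u \<tau> p / \<tau> p else 0)) * Wbop \<tau> (int (j - i)) p)" for j p
    unfolding W pd_vertex_coeff_quotient[OF t nz] Gbc_eq_vertex_coeff[OF f] by simp
  show "Wbop \<tau> (int 0) p \<noteq> 0" for p
    unfolding Wbop_nonneg Gbc_eq_vertex_coeff[OF t] using nz by simp
qed

section \<open>Difference operators\<close>

abbreviation zero_fn :: fn where "zero_fn \<equiv> (\<lambda>_. 0)"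

definition dzero :: dop where "dzero = (\<lambda>i p. 0)"

definition bounded_above :: "dop \<Rightarrow> bool" where
  "bounded_above A \<longleftrightarrow> (\<exists>N. \<forall>i. A i \<noteq> zero_fn \<longrightarrow> i \<le> N)"

definition bounded_below :: "dop \<Rightarrow> bool" where
  "bounded_below A \<longleftrightarrow> (\<exists>N. \<forall>i. A i \<noteq> zero_fn \<longrightarrow> N \<le> i)"

definition banded :: "dop \<Rightarrow> bool" where
  "banded A \<longleftrightarrow> bounded_above A \<and> bounded_below A"

text \<open>The product ** sums over the set of contributing indices; it is the intended product
  only where that set is finite (an infinite sum is 0).\<close>

definition mult_finite :: "dop \<Rightarrow> dop \<Rightarrow> bool" where
  "mult_finite A B \<longleftrightarrow> (\<forall>k. finite {i. A i \<noteq> zero_fn \<and> B (k - i) \<noteq> zero_fn})"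

definition triple_support :: "dop \<Rightarrow> dop \<Rightarrow> dop \<Rightarrow> int \<Rightarrow> (int \<times> int) set" where
  "triple_support A B C k = {(i, j). A i \<noteq> zero_fn \<and> B j \<noteq> zero_fn \<and> C (k - i - j) \<noteq> zero_fn}"

definition smooth_coeffs :: "dop \<Rightarrow> bool" where
  "smooth_coeffs A \<longleftrightarrow> (\<forall>i. smooth_fn (A i))"

lemma dmul_eq_sum:
  assumes "finite F" and "{i. A i \<noteq> zero_fn \<and> B (k - i) \<noteq> zero_fn} \<subseteq> F"
  shows "(A ** B) k p = (\<Sum>i\<in>F. A i p * B (k - i) (shiftp i p))"
  unfolding dmul_def
  by (rule sum.mono_neutral_left[OF assms]) auto

lemma dmul_eq_zero: "(\<And>i. A i = zero_fn \<or> B (k - i) = zero_fn) \<Longrightarrow> (A ** B) k = zero_fn"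
proof -
  assume "\<And>i. A i = zero_fn \<or> B (k - i) = zero_fn"
  then have "{i. A i \<noteq> zero_fn \<and> B (k - i) \<noteq> zero_fn} = {}" by auto
  then show ?thesis unfolding dmul_def by (simp only: sum.empty)
qed

lemma dmul_nonzeroD: "(A ** B) k \<noteq> zero_fn \<Longrightarrow> \<exists>i. A i \<noteq> zero_fn \<and> B (k - i) \<noteq> zero_fn"
  using dmul_eq_zero by blast

lemma sum_shear:
  fixes X :: "int \<times> int \<Rightarrow> 'a :: comm_monoid_add"
  assumes fD: "finite D" and X: "\<And>x. x \<notin> D \<Longrightarrow> X x = 0"
  shows "(\<Sum>l\<in>(\<lambda>(i, j). i + j) ` D. \<Sum>i\<in>fst ` D. X (i, l - i)) = (\<Sum>x\<in>D. X x)"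
proof -
  let ?L = "(\<lambda>(i, j). i + j) ` D" and ?I = "fst ` D" and ?shear = "\<lambda>(i, j). (i + j, i)"
  have "(\<Sum>l\<in>?L. \<Sum>i\<in>?I. X (i, l - i)) = (\<Sum>(l, i)\<in>?L \<times> ?I. X (i, l - i))"
    by (rule sum.cartesian_product)
  also have "\<dots> = (\<Sum>(l, i)\<in>?shear ` D. X (i, l - i))"
  proof (rule sum.mono_neutral_right)
    show "\<forall>x\<in>?L \<times> ?I - ?shear ` D. (case x of (l, i) \<Rightarrow> X (i, l - i)) = 0"
    proof
      fix x assume x: "x \<in> ?L \<times> ?I - ?shear ` D"
      obtain l i where [simp]: "x = (l, i)" by fastforce
      have "(i, l - i) \<notin> D"
      proof
        assume "(i, l - i) \<in> D"
        then have "(l, i) \<in> ?shear ` D" by (rule rev_image_eqI) simp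
        then show False using x by simp
      qed
      then show "(case x of (l, i) \<Rightarrow> X (i, l - i)) = 0" using X by simp
    qed
  qed (use fD in force)+
  also have "\<dots> = (\<Sum>x\<in>D. (\<lambda>(l, i). X (i, l - i)) (?shear x))"
    by (rule sum.reindex[unfolded comp_def]) (auto simp: inj_on_def)
  also have "\<dots> = (\<Sum>x\<in>D. X x)"
    by (rule sum.cong) auto
  finally show ?thesis .
qed

lemma dmul_dmul_left_eq_sum:
  assumes fT: "finite (triple_support A B C k)"
  shows "((A ** B) ** C) k p = (\<Sum>(i, j)\<in>triple_support A B C k.
           A i p * B j (shiftp i p) * C (k - i - j) (shiftp (i + j) p))"
    (is "_ = (\<Sum>x\<in>?T. ?X x)")
proof -
  let ?L = "(\<lambda>(i, j). i + j) ` ?T" and ?I = "fst ` ?T"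
  have fin: "finite ?L" "finite ?I" using fT by auto
  have "((A ** B) ** C) k p = (\<Sum>l\<in>?L. (A ** B) l p * C (k - l) (shiftp l p))"
  proof (rule dmul_eq_sum[OF fin(1)], rule subsetI)
    fix l assume "l \<in> {i. (A ** B) i \<noteq> zero_fn \<and> C (k - i) \<noteq> zero_fn}"
    then obtain i where "A i \<noteq> zero_fn" "B (l - i) \<noteq> zero_fn" "C (k - l) \<noteq> zero_fn"
      using dmul_nonzeroD by blast
    then have "(i, l - i) \<in> ?T" unfolding triple_support_def by simp
    then show "l \<in> ?L" by (rule rev_image_eqI) simp
  qed
  also have "\<dots> = (\<Sum>l\<in>?L. \<Sum>i\<in>?I. ?X (i, l - i))"
  proof (rule sum.cong[OF refl])
    fix l
    show "(A ** B) l p * C (k - l) (shiftp l p) = (\<Sum>i\<in>?I. ?X (i, l - i))"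
    proof (cases "C (k - l) = zero_fn")
      case False
      have "(A ** B) l p = (\<Sum>i\<in>?I. A i p * B (l - i) (shiftp i p))"
      proof (rule dmul_eq_sum[OF fin(2)], rule subsetI)
        fix i assume "i \<in> {i. A i \<noteq> zero_fn \<and> B (l - i) \<noteq> zero_fn}"
        then have "(i, l - i) \<in> ?T" unfolding triple_support_def using False by simp
        then show "i \<in> ?I" by (rule rev_image_eqI) simp
      qed
      then show ?thesis by (simp add: sum_distrib_right)
    qed simp
  qed
  also have "\<dots> = (\<Sum>x\<in>?T. ?X x)"
    by (rule sum_shear[OF fT]) (auto simp: triple_support_def)
  finally show ?thesis .
qed

lemma dmul_dmul_right_eq_sum:
  assumes fT: "finite (triple_support A B C k)"
  shows "(A ** (B ** C)) k p = (\<Sum>(i, j)\<in>triple_support A B C k.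
           A i p * B j (shiftp i p) * C (k - i - j) (shiftp (i + j) p))"
    (is "_ = (\<Sum>x\<in>?T. ?X x)")
proof -
  let ?I = "fst ` ?T" and ?J = "snd ` ?T"
  have fin: "finite ?I" "finite ?J" using fT by auto
  have "(A ** (B ** C)) k p = (\<Sum>i\<in>?I. A i p * (B ** C) (k - i) (shiftp i p))"
  proof (rule dmul_eq_sum[OF fin(1)], rule subsetI)
    fix i assume "i \<in> {i. A i \<noteq> zero_fn \<and> (B ** C) (k - i) \<noteq> zero_fn}"
    then obtain j where "A i \<noteq> zero_fn" "B j \<noteq> zero_fn" "C (k - i - j) \<noteq> zero_fn"
      using dmul_nonzeroD by blast
    then have "(i, j) \<in> ?T" unfolding triple_support_def by simp
    then show "i \<in> ?I" by (rule rev_image_eqI) simp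
  qed
  also have "\<dots> = (\<Sum>i\<in>?I. \<Sum>j\<in>?J. ?X (i, j))"
  proof (rule sum.cong[OF refl])
    fix i
    show "A i p * (B ** C) (k - i) (shiftp i p) = (\<Sum>j\<in>?J. ?X (i, j))"
    proof (cases "A i = zero_fn")
      case False
      have "(B ** C) (k - i) (shiftp i p) =
          (\<Sum>j\<in>?J. B j (shiftp i p) * C (k - i - j) (shiftp j (shiftp i p)))"
      proof (rule dmul_eq_sum[OF fin(2)], rule subsetI)
        fix j assume "j \<in> {j. B j \<noteq> zero_fn \<and> C (k - i - j) \<noteq> zero_fn}"
        then have "(i, j) \<in> ?T" unfolding triple_support_def using False by simp
        then show "j \<in> ?J" by (rule rev_image_eqI) simp
      qed
      then show ?thesis by (simp add: sum_distrib_left shiftp_shiftp mult.assoc add.commute)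
    qed simp
  qed
  also have "\<dots> = (\<Sum>x\<in>?I \<times> ?J. ?X x)"
    by (rule sum.cartesian_product'[symmetric])
  also have "\<dots> = (\<Sum>x\<in>?T. ?X x)"
  proof (rule sum.mono_neutral_right)
    show "?T \<subseteq> ?I \<times> ?J" by force
    show "\<forall>x\<in>?I \<times> ?J - ?T. ?X x = 0" unfolding triple_support_def by auto
  qed (use fin in auto)
  finally show ?thesis .
qed

lemma dmul_assoc:
  "(\<And>k. finite (triple_support A B C k)) \<Longrightarrow> (A ** B) ** C = A ** (B ** C)"
  by (intro ext) (simp add: dmul_dmul_left_eq_sum dmul_dmul_right_eq_sum)

lemma finite_triple_supportI:
  assumes "\<And>i j. A i \<noteq> zero_fn \<Longrightarrow> B j \<noteq> zero_fn \<Longrightarrow> C (k - i - j) \<noteq> zero_fn \<Longrightarrow>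
      a \<le> i \<and> i \<le> b \<and> c \<le> j \<and> j \<le> d"
  shows "finite (triple_support A B C k)"
proof (rule finite_subset)
  show "triple_support A B C k \<subseteq> {a..b} \<times> {c..d}"
  proof
    fix x assume "x \<in> triple_support A B C k"
    then obtain i j where "x = (i, j)" "A i \<noteq> zero_fn" "B j \<noteq> zero_fn" "C (k - i - j) \<noteq> zero_fn"
      unfolding triple_support_def by auto
    then show "x \<in> {a..b} \<times> {c..d}" using assms by auto
  qed
qed simp

lemma finite_triple_support_bounded_above:
  assumes "bounded_above A" "bounded_above B" "bounded_above C"
  shows "finite (triple_support A B C k)"
proof -
  obtain a b c where ab: "\<And>i. A i \<noteq> zero_fn \<Longrightarrow> i \<le> a" "\<And>i. B i \<noteq> zero_fn \<Longrightarrow> i \<le> b"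
    and c: "\<And>i. C i \<noteq> zero_fn \<Longrightarrow> i \<le> c"
    using assms unfolding bounded_above_def by metis
  show ?thesis
  proof (rule finite_triple_supportI)
    fix i j assume "A i \<noteq> zero_fn" "B j \<noteq> zero_fn" "C (k - i - j) \<noteq> zero_fn"
    then have "i \<le> a" "j \<le> b" "k - i - j \<le> c" using ab c by blast+
    then show "k - b - c \<le> i \<and> i \<le> a \<and> k - a - c \<le> j \<and> j \<le> b" by linarith
  qed
qed

lemma finite_triple_support_bounded_below:
  assumes "bounded_below A" "bounded_below B" "bounded_below C"
  shows "finite (triple_support A B C k)"
proof -
  obtain a b c where ab: "\<And>i. A i \<noteq> zero_fn \<Longrightarrow> a \<le> i" "\<And>i. B i \<noteq> zero_fn \<Longrightarrow> b \<le> i"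
    and c: "\<And>i. C i \<noteq> zero_fn \<Longrightarrow> c \<le> i"
    using assms unfolding bounded_below_def by metis
  show ?thesis
  proof (rule finite_triple_supportI)
    fix i j assume "A i \<noteq> zero_fn" "B j \<noteq> zero_fn" "C (k - i - j) \<noteq> zero_fn"
    then have "a \<le> i" "b \<le> j" "c \<le> k - i - j" using ab c by blast+
    then show "a \<le> i \<and> i \<le> k - b - c \<and> b \<le> j \<and> j \<le> k - a - c" by linarith
  qed
qed

lemma banded_bounds:
  assumes "banded A"
  obtains a a' where "\<And>i. A i \<noteq> zero_fn \<Longrightarrow> a' \<le> i \<and> i \<le> a"
  using assms unfolding banded_def bounded_above_def bounded_below_def by metis

lemma finite_triple_support_banded_outer:
  assumes "banded A" "banded C"
  shows "finite (triple_support A B C k)"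
proof -
  obtain a a' c c' where a: "\<And>i. A i \<noteq> zero_fn \<Longrightarrow> a' \<le> i \<and> i \<le> a"
    and c: "\<And>i. C i \<noteq> zero_fn \<Longrightarrow> c' \<le> i \<and> i \<le> c"
    using banded_bounds[OF assms(1)] banded_bounds[OF assms(2)] by metis
  show ?thesis
  proof (rule finite_triple_supportI)
    fix i j assume "A i \<noteq> zero_fn" "C (k - i - j) \<noteq> zero_fn"
    then have "a' \<le> i \<and> i \<le> a" "c' \<le> k - i - j \<and> k - i - j \<le> c" using a c by blast+
    then show "a' \<le> i \<and> i \<le> a \<and> k - a - c \<le> j \<and> j \<le> k - a' - c'" by linarith
  qed
qed

lemma finite_triple_support_banded_left:
  assumes "banded A" "banded B"
  shows "finite (triple_support A B C k)"
proof -
  obtain a a' b b' where "\<And>i. A i \<noteq> zero_fn \<Longrightarrow> a' \<le> i \<and> i \<le> a"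
    "\<And>i. B i \<noteq> zero_fn \<Longrightarrow> b' \<le> i \<and> i \<le> b"
    using banded_bounds[OF assms(1)] banded_bounds[OF assms(2)] by metis
  then show ?thesis
    by (intro finite_triple_supportI[where a = a' and b = a and c = b' and d = b]) blast
qed

lemma dmul_assoc_bounded_above:
  "bounded_above A \<Longrightarrow> bounded_above B \<Longrightarrow> bounded_above C \<Longrightarrow> (A ** B) ** C = A ** (B ** C)"
  by (intro dmul_assoc finite_triple_support_bounded_above)

lemma dmul_assoc_bounded_below:
  "bounded_below A \<Longrightarrow> bounded_below B \<Longrightarrow> bounded_below C \<Longrightarrow> (A ** B) ** C = A ** (B ** C)"
  by (intro dmul_assoc finite_triple_support_bounded_below)

lemma dmul_assoc_banded_outer: "banded A \<Longrightarrow> banded C \<Longrightarrow> (A ** B) ** C = A ** (B ** C)"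
  by (intro dmul_assoc finite_triple_support_banded_outer)

lemma dmul_assoc_banded_left: "banded A \<Longrightarrow> banded B \<Longrightarrow> (A ** B) ** C = A ** (B ** C)"
  by (intro dmul_assoc finite_triple_support_banded_left)

lemma mult_finiteI:
  assumes "\<And>k i. A i \<noteq> zero_fn \<Longrightarrow> B (k - i) \<noteq> zero_fn \<Longrightarrow> a k \<le> i \<and> i \<le> b k"
  shows "mult_finite A B"
  unfolding mult_finite_def
proof
  fix k
  have "{i. A i \<noteq> zero_fn \<and> B (k - i) \<noteq> zero_fn} \<subseteq> {a k..b k}"
    using assms by auto
  then show "finite {i. A i \<noteq> zero_fn \<and> B (k - i) \<noteq> zero_fn}"
    by (rule finite_subset) simp
qed

lemma mult_finite_bounded_above:
  assumes "bounded_above A" "bounded_above B"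
  shows "mult_finite A B"
proof -
  obtain a b where "\<And>i. A i \<noteq> zero_fn \<Longrightarrow> i \<le> a" "\<And>i. B i \<noteq> zero_fn \<Longrightarrow> i \<le> b"
    using assms unfolding bounded_above_def by metis
  then show ?thesis
    by (intro mult_finiteI[where a = "\<lambda>k. k - b" and b = "\<lambda>_. a"]) fastforce
qed

lemma mult_finite_bounded_below:
  assumes "bounded_below A" "bounded_below B"
  shows "mult_finite A B"
proof -
  obtain a b where "\<And>i. A i \<noteq> zero_fn \<Longrightarrow> a \<le> i" "\<And>i. B i \<noteq> zero_fn \<Longrightarrow> b \<le> i"
    using assms unfolding bounded_below_def by metis
  then show ?thesis
    by (intro mult_finiteI[where a = "\<lambda>_. a" and b = "\<lambda>k. k - b"]) fastforce
qed

lemma mult_finite_banded_left: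
  assumes "banded A"
  shows "mult_finite A B"
proof -
  obtain a a' where "\<And>i. A i \<noteq> zero_fn \<Longrightarrow> a' \<le> i \<and> i \<le> a"
    using banded_bounds[OF assms] by metis
  then show ?thesis
    by (intro mult_finiteI[where a = "\<lambda>_. a'" and b = "\<lambda>_. a"]) blast
qed

lemma mult_finite_banded_right:
  assumes "banded B"
  shows "mult_finite A B"
proof -
  obtain b b' where "\<And>i. B i \<noteq> zero_fn \<Longrightarrow> b' \<le> i \<and> i \<le> b"
    using banded_bounds[OF assms] by metis
  then show ?thesis
    by (intro mult_finiteI[where a = "\<lambda>k. k - b" and b = "\<lambda>k. k - b'"]) fastforce
qed

lemma bounded_above_dmul:
  assumes "bounded_above A" "bounded_above B"
  shows "bounded_above (A ** B)"
proof -
  obtain a b where ab: "\<And>i. A i \<noteq> zero_fn \<Longrightarrow> i \<le> a" "\<And>i. B i \<noteq> zero_fn \<Longrightarrow> i \<le> b"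
    using assms unfolding bounded_above_def by metis
  have "k \<le> a + b" if nz: "(A ** B) k \<noteq> zero_fn" for k
  proof -
    obtain i where "A i \<noteq> zero_fn" "B (k - i) \<noteq> zero_fn" using dmul_nonzeroD[OF nz] by blast
    then show ?thesis using ab[of i] ab(2)[of "k - i"] by simp
  qed
  then show ?thesis unfolding bounded_above_def by blast
qed

lemma bounded_below_dmul:
  assumes "bounded_below A" "bounded_below B"
  shows "bounded_below (A ** B)"
proof -
  obtain a b where ab: "\<And>i. A i \<noteq> zero_fn \<Longrightarrow> a \<le> i" "\<And>i. B i \<noteq> zero_fn \<Longrightarrow> b \<le> i"
    using assms unfolding bounded_below_def by metis
  have "a + b \<le> k" if nz: "(A ** B) k \<noteq> zero_fn" for k
  proof -
    obtain i where "A i \<noteq> zero_fn" "B (k - i) \<noteq> zero_fn" using dmul_nonzeroD[OF nz] by blast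
    then show ?thesis using ab[of i] ab(2)[of "k - i"] by simp
  qed
  then show ?thesis unfolding bounded_below_def by blast
qed

lemma banded_dmul: "banded A \<Longrightarrow> banded B \<Longrightarrow> banded (A ** B)"
  unfolding banded_def using bounded_above_dmul bounded_below_dmul by blast

lemma lam_nonzero_iff: "lam n i \<noteq> zero_fn \<longleftrightarrow> i = n"
  unfolding lam_def by (auto dest: fun_cong)

lemma banded_lam: "banded (lam n)"
  unfolding banded_def bounded_above_def bounded_below_def lam_nonzero_iff by auto

lemma bounded_above_lam: "bounded_above (lam n)"
  using banded_lam unfolding banded_def by blast

lemma bounded_below_lam: "bounded_below (lam n)"
  using banded_lam unfolding banded_def by blast

lemma lam_0_dmul: "lam 0 ** A = A"
proof (intro ext)
  fix k p
  have "(lam 0 ** A) k p = (\<Sum>i\<in>{0}. lam 0 i p * A (k - i) (shiftp i p))"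
    by (rule dmul_eq_sum) (auto simp: lam_nonzero_iff)
  then show "(lam 0 ** A) k p = A k p" by (simp add: lam_def)
qed

lemma dmul_lam_0: "A ** lam 0 = A"
proof (intro ext)
  fix k p
  have "(A ** lam 0) k p = (\<Sum>i\<in>{k}. A i p * lam 0 (k - i) (shiftp i p))"
    by (rule dmul_eq_sum) (auto simp: lam_nonzero_iff)
  then show "(A ** lam 0) k p = A k p" by (simp add: lam_def)
qed

lemma lam_dmul_lam: "lam a ** lam b = lam (a + b)"
proof (intro ext)
  fix k p
  have "(lam a ** lam b) k p = (\<Sum>i\<in>{a}. lam a i p * lam b (k - i) (shiftp i p))"
    by (rule dmul_eq_sum) (auto simp: lam_nonzero_iff)
  then show "(lam a ** lam b) k p = lam (a + b) k p" by (auto simp: lam_def)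
qed

lemma dmul_dzero: "A ** dzero = dzero"
  unfolding dzero_def by (intro ext) (simp add: dmul_eq_zero)

lemma dadd_dzero: "dadd A dzero = A"
  unfolding dadd_def dzero_def by simp

lemma dmul_dadd_left:
  assumes "mult_finite A C" "mult_finite B C"
  shows "dadd A B ** C = dadd (A ** C) (B ** C)"
proof (intro ext)
  fix k p
  let ?F = "{i. A i \<noteq> zero_fn \<and> C (k - i) \<noteq> zero_fn} \<union> {i. B i \<noteq> zero_fn \<and> C (k - i) \<noteq> zero_fn}"
  have f: "finite ?F" using assms unfolding mult_finite_def by auto
  have "(dadd A B ** C) k p = (\<Sum>i\<in>?F. dadd A B i p * C (k - i) (shiftp i p))"
    by (rule dmul_eq_sum[OF f]) (auto simp: dadd_def)
  moreover have "(A ** C) k p = (\<Sum>i\<in>?F. A i p * C (k - i) (shiftp i p))"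
    "(B ** C) k p = (\<Sum>i\<in>?F. B i p * C (k - i) (shiftp i p))"
    by (rule dmul_eq_sum[OF f], auto)+
  ultimately show "(dadd A B ** C) k p = dadd (A ** C) (B ** C) k p"
    by (simp add: dadd_def sum.distrib distrib_right)
qed

lemma dmul_dadd_right:
  assumes "mult_finite C A" "mult_finite C B"
  shows "C ** dadd A B = dadd (C ** A) (C ** B)"
proof (intro ext)
  fix k p
  let ?F = "{i. C i \<noteq> zero_fn \<and> A (k - i) \<noteq> zero_fn} \<union> {i. C i \<noteq> zero_fn \<and> B (k - i) \<noteq> zero_fn}"
  have f: "finite ?F" using assms unfolding mult_finite_def by auto
  have "(C ** dadd A B) k p = (\<Sum>i\<in>?F. C i p * dadd A B (k - i) (shiftp i p))"
    by (rule dmul_eq_sum[OF f]) (auto simp: dadd_def)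
  moreover have "(C ** A) k p = (\<Sum>i\<in>?F. C i p * A (k - i) (shiftp i p))"
    "(C ** B) k p = (\<Sum>i\<in>?F. C i p * B (k - i) (shiftp i p))"
    by (rule dmul_eq_sum[OF f], auto)+
  ultimately show "(C ** dadd A B) k p = dadd (C ** A) (C ** B) k p"
    by (simp add: dadd_def sum.distrib distrib_left)
qed

lemma dmul_dsmul_left: "mult_finite A B \<Longrightarrow> dsmul c A ** B = dsmul c (A ** B)"
proof (intro ext)
  fix k p
  assume "mult_finite A B"
  then have f: "finite {i. A i \<noteq> zero_fn \<and> B (k - i) \<noteq> zero_fn}" unfolding mult_finite_def by auto
  have "(dsmul c A ** B) k p = (\<Sum>i\<in>{i. A i \<noteq> zero_fn \<and> B (k - i) \<noteq> zero_fn}. dsmul c A i p * B (k - i) (shiftp i p))"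
    by (rule dmul_eq_sum[OF f]) (auto simp: dsmul_def)
  then show "(dsmul c A ** B) k p = dsmul c (A ** B) k p"
    by (simp add: dsmul_def dmul_def sum_distrib_left mult.assoc)
qed

lemma dmul_dsmul_right: "mult_finite A B \<Longrightarrow> A ** dsmul c B = dsmul c (A ** B)"
proof (intro ext)
  fix k p
  assume "mult_finite A B"
  then have f: "finite {i. A i \<noteq> zero_fn \<and> B (k - i) \<noteq> zero_fn}" unfolding mult_finite_def by auto
  have "(A ** dsmul c B) k p = (\<Sum>i\<in>{i. A i \<noteq> zero_fn \<and> B (k - i) \<noteq> zero_fn}. A i p * dsmul c B (k - i) (shiftp i p))"
    by (rule dmul_eq_sum[OF f]) (auto simp: dsmul_def)
  then show "(A ** dsmul c B) k p = dsmul c (A ** B) k p"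
    by (simp add: dsmul_def dmul_def sum_distrib_left mult_ac)
qed

lemma dpd_nonzero: "dpd v A i \<noteq> zero_fn \<Longrightarrow> A i \<noteq> zero_fn"
  unfolding dpd_def using pd_const by auto

lemma bounded_above_dpd: "bounded_above A \<Longrightarrow> bounded_above (dpd v A)"
  unfolding bounded_above_def using dpd_nonzero by blast

lemma bounded_below_dpd: "bounded_below A \<Longrightarrow> bounded_below (dpd v A)"
  unfolding bounded_below_def using dpd_nonzero by blast

lemma bounded_above_dsmul: "bounded_above A \<Longrightarrow> bounded_above (dsmul c A)"
  unfolding bounded_above_def dsmul_def by (metis mult_zero_right)

lemma bounded_below_dsmul: "bounded_below A \<Longrightarrow> bounded_below (dsmul c A)"
  unfolding bounded_below_def dsmul_def by (metis mult_zero_right)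

lemma smooth_coeffs_lam: "smooth_coeffs (lam n)"
  unfolding smooth_coeffs_def lam_def by (auto intro: smooth_fn_const)

lemma smooth_coeffs_dmul:
  assumes "mult_finite A B" "smooth_coeffs A" "smooth_coeffs B"
  shows "smooth_coeffs (A ** B)"
  unfolding smooth_coeffs_def
proof
  fix k
  let ?F = "{i. A i \<noteq> zero_fn \<and> B (k - i) \<noteq> zero_fn}"
  have f: "finite ?F" using assms unfolding mult_finite_def by auto
  have "(A ** B) k = (\<lambda>p. \<Sum>i\<in>?F. A i p * B (k - i) (shiftp i p))"
    by (intro ext dmul_eq_sum[OF f]) auto
  then show "smooth_fn ((A ** B) k)"
    using assms(2,3) unfolding smooth_coeffs_def by (simp add: smooth_fn_sum smooth_fn_mult smooth_fn_shift)
qed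

lemma dpd_dmul:
  assumes fs: "mult_finite A B" and a: "smooth_coeffs A" and b: "smooth_coeffs B"
  shows "dpd v (A ** B) = dadd (dpd v A ** B) (A ** dpd v B)"
proof
  fix k
  let ?F = "{i. A i \<noteq> zero_fn \<and> B (k - i) \<noteq> zero_fn}"
  have f: "finite ?F" using fs unfolding mult_finite_def by auto
  have sm: "smooth_fn (A i)" "smooth_fn (B i)" for i using a b unfolding smooth_coeffs_def by auto
  have "(A ** B) k = (\<lambda>p. \<Sum>i\<in>?F. A i p * B (k - i) (shiftp i p))"
    by (intro ext dmul_eq_sum[OF f]) auto
  then have "dpd v (A ** B) k = (\<lambda>p. \<Sum>i\<in>?F. pd v (\<lambda>p. A i p * B (k - i) (shiftp i p)) p)"
    unfolding dpd_def by (simp add: pd_sum smooth_fn_mult smooth_fn_shift sm)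
  also have "\<dots> = (\<lambda>p. \<Sum>i\<in>?F. dpd v A i p * B (k - i) (shiftp i p) + A i p * dpd v B (k - i) (shiftp i p))"
    unfolding dpd_def by (simp add: pd_mult pd_shift smooth_fn_shift sm)
  also have "\<dots> = dadd (dpd v A ** B) (A ** dpd v B) k"
  proof
    fix p
    have "(dpd v A ** B) k p = (\<Sum>i\<in>?F. dpd v A i p * B (k - i) (shiftp i p))"
      "(A ** dpd v B) k p = (\<Sum>i\<in>?F. A i p * dpd v B (k - i) (shiftp i p))"
      by (rule dmul_eq_sum[OF f], auto dest: dpd_nonzero)+
    then show "(\<Sum>i\<in>?F. dpd v A i p * B (k - i) (shiftp i p) + A i p * dpd v B (k - i) (shiftp i p)) =
        dadd (dpd v A ** B) (A ** dpd v B) k p"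
      unfolding dadd_def by (simp add: sum.distrib)
  qed
  finally show "dpd v (A ** B) k = dadd (dpd v A ** B) (A ** dpd v B) k" .
qed

lemma dpd_lam: "dpd v (lam a) = dzero"
  unfolding dpd_def lam_def dzero_def using pd_const by (auto intro!: ext)

text \<open>Coefficients of the left inverse of W = 1 + (lower order terms), by recursion on the
  order; for W with only non-negative powers the leading coefficient W 0 must be inverted.\<close>

function inv_neg_coeff :: "dop \<Rightarrow> nat \<Rightarrow> fn" where
  "inv_neg_coeff W n = (\<lambda>p. (if n = 0 then 1 else 0) -
     (\<Sum>i<n. inv_neg_coeff W i p * W (int i - int n) (shiftp (- int i) p)))"
  by auto
termination by (relation "Wellfounded.measure snd") auto

function inv_pos_coeff :: "dop \<Rightarrow> nat \<Rightarrow> fn" where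
  "inv_pos_coeff W n = (\<lambda>p. ((if n = 0 then 1 else 0) -
     (\<Sum>i<n. inv_pos_coeff W i p * W (int n - int i) (shiftp (int i) p))) / W 0 (shiftp (int n) p))"
  by auto
termination by (relation "Wellfounded.measure snd") auto

declare inv_neg_coeff.simps [simp del] inv_pos_coeff.simps [simp del]

lemma smooth_fn_inv_neg_coeff:
  assumes "smooth_coeffs W"
  shows "smooth_fn (inv_neg_coeff W n)"
proof (induction n rule: less_induct)
  case (less n)
  then show ?case
    using assms unfolding smooth_coeffs_def
    by (subst inv_neg_coeff.simps)
      (intro smooth_fn_diff smooth_fn_const smooth_fn_sum smooth_fn_mult smooth_fn_shift; simp)
qed

lemma smooth_fn_inv_pos_coeff:
  assumes "smooth_coeffs W" and "\<And>p. W 0 p \<noteq> 0"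
  shows "smooth_fn (inv_pos_coeff W n)"
proof (induction n rule: less_induct)
  case (less n)
  then show ?case
    using assms unfolding smooth_coeffs_def
    by (subst inv_pos_coeff.simps)
      (intro smooth_fn_divide smooth_fn_diff smooth_fn_const smooth_fn_sum smooth_fn_mult
        smooth_fn_shift; simp)
qed

definition left_inv_neg :: "dop \<Rightarrow> dop" where
  "left_inv_neg W = (\<lambda>k. if k \<le> 0 then inv_neg_coeff W (nat (- k)) else zero_fn)"

definition left_inv_pos :: "dop \<Rightarrow> dop" where
  "left_inv_pos W = (\<lambda>k. if k \<ge> 0 then inv_pos_coeff W (nat k) else zero_fn)"

lemma left_inv_neg_dmul:
  assumes W0: "W 0 = (\<lambda>_. 1)" and Wp: "\<forall>i>0. W i = zero_fn"
  shows "left_inv_neg W ** W = lam 0"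
proof (intro ext)
  fix k p
  show "(left_inv_neg W ** W) k p = lam 0 k p"
  proof (cases "k \<le> 0")
    case False
    have "(left_inv_neg W ** W) k = zero_fn"
      by (rule dmul_eq_zero) (use False Wp in \<open>auto simp: left_inv_neg_def\<close>)
    then show ?thesis using False by (simp add: lam_def)
  next
    case True
    define n where "n = nat (- k)"
    have k: "k = - int n" using True n_def by simp
    have "(left_inv_neg W ** W) k p =
        (\<Sum>i\<in>(\<lambda>t. - int t) ` {..n}. left_inv_neg W i p * W (k - i) (shiftp i p))"
    proof (rule dmul_eq_sum, simp, rule subsetI)
      fix i assume "i \<in> {i. left_inv_neg W i \<noteq> zero_fn \<and> W (k - i) \<noteq> zero_fn}"
      then have "i \<le> 0" "k - i \<le> 0" using Wp by (auto simp: left_inv_neg_def split: if_splits)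
      then have "i = - int (nat (- i))" "nat (- i) \<le> n" using k by auto
      then show "i \<in> (\<lambda>t. - int t) ` {..n}" by blast
    qed
    also have "\<dots> = (\<Sum>t\<le>n. inv_neg_coeff W t p * W (int t - int n) (shiftp (- int t) p))"
      by (subst sum.reindex) (auto simp: inj_on_def left_inv_neg_def k intro!: sum.cong)
    also have "\<dots> = (\<Sum>t<n. inv_neg_coeff W t p * W (int t - int n) (shiftp (- int t) p)) + inv_neg_coeff W n p"
      using W0 by (simp add: lessThan_Suc_atMost[symmetric])
    also have "\<dots> = (if n = 0 then 1 else 0)"
      by (subst (2) inv_neg_coeff.simps) simp
    finally show ?thesis using k by (simp add: lam_def)
  qed
qed

lemma left_inv_pos_dmul:
  assumes W0: "\<And>p. W 0 p \<noteq> 0" and Wn: "\<forall>i<0. W i = zero_fn"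
  shows "left_inv_pos W ** W = lam 0"
proof (intro ext)
  fix k p
  show "(left_inv_pos W ** W) k p = lam 0 k p"
  proof (cases "k \<ge> 0")
    case False
    have "(left_inv_pos W ** W) k = zero_fn"
      by (rule dmul_eq_zero) (use False Wn in \<open>auto simp: left_inv_pos_def\<close>)
    then show ?thesis using False by (simp add: lam_def)
  next
    case True
    define n where "n = nat k"
    have k: "k = int n" using True n_def by simp
    have "(left_inv_pos W ** W) k p = (\<Sum>i\<in>int ` {..n}. left_inv_pos W i p * W (k - i) (shiftp i p))"
    proof (rule dmul_eq_sum, simp, rule subsetI)
      fix i assume "i \<in> {i. left_inv_pos W i \<noteq> zero_fn \<and> W (k - i) \<noteq> zero_fn}"
      then have "i \<ge> 0" "k - i \<ge> 0" using Wn by (auto simp: left_inv_pos_def not_le split: if_splits)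
      then have "i = int (nat i)" "nat i \<le> n" using k by auto
      then show "i \<in> int ` {..n}" by blast
    qed
    also have "\<dots> = (\<Sum>t\<le>n. inv_pos_coeff W t p * W (int n - int t) (shiftp (int t) p))"
      by (subst sum.reindex) (auto simp: inj_on_def left_inv_pos_def k intro!: sum.cong)
    also have "\<dots> = (\<Sum>t<n. inv_pos_coeff W t p * W (int n - int t) (shiftp (int t) p))
        + inv_pos_coeff W n p * W 0 (shiftp (int n) p)"
      by (simp add: lessThan_Suc_atMost[symmetric])
    also have "\<dots> = (if n = 0 then 1 else 0)"
      by (subst (2) inv_pos_coeff.simps) (simp add: W0)
    finally show ?thesis using k by (simp add: lam_def)
  qed
qed

text \<open>The algebra below is carried out in a class P of operators (those bounded above, or those
  bounded below) in which products exist and are associative.\<close>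

lemma left_inverse_is_right_inverse:
  assumes assoc: "\<And>A B C. P A \<Longrightarrow> P B \<Longrightarrow> P C \<Longrightarrow> (A ** B) ** C = A ** (B ** C)"
    and "P U" "P V" "P W" and UV: "U ** V = lam 0" and VW: "V ** W = lam 0"
  shows "W ** V = lam 0"
proof -
  have "U = (U ** V) ** W"
    using assoc[of U V W] assms(2-4) VW by (simp add: dmul_lam_0)
  then have "U = W" by (simp add: UV lam_0_dmul)
  then show ?thesis using UV by simp
qed

lemma inverse_unique:
  assumes assoc: "\<And>A B C. P A \<Longrightarrow> P B \<Longrightarrow> P C \<Longrightarrow> (A ** B) ** C = A ** (B ** C)"
    and "P V'" "P W" "P V" and "V' ** W = lam 0" and "W ** V = lam 0"
  shows "V' = V"
  using assoc[of V' W V] assms(2-6) by (simp add: dmul_lam_0 lam_0_dmul)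

lemma inv_neg_inverse:
  assumes W0: "W 0 = (\<lambda>_. 1)" and Wp: "\<forall>i>0. W i = zero_fn" and W: "smooth_coeffs W"
  shows "(\<forall>i>0. inv_neg W i = zero_fn) \<and> W ** inv_neg W = lam 0 \<and> inv_neg W ** W = lam 0
    \<and> smooth_coeffs (inv_neg W)"
proof -
  define V where "V = left_inv_neg W"
  have Vp: "\<forall>i>0. V i = zero_fn"
    unfolding V_def left_inv_neg_def by simp
  have V0: "V 0 = (\<lambda>_. 1)"
    unfolding V_def left_inv_neg_def by (subst inv_neg_coeff.simps) simp
  have above: "bounded_above X" if "\<forall>i>0. X i = zero_fn" for X
    using that unfolding bounded_above_def by (metis not_le)
  have "bounded_above (left_inv_neg V)"
    by (rule above) (simp add: left_inv_neg_def)
  moreover have VW: "V ** W = lam 0"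
    unfolding V_def by (rule left_inv_neg_dmul[OF W0 Wp])
  ultimately have WV: "W ** V = lam 0"
    using left_inverse_is_right_inverse[OF dmul_assoc_bounded_above _ _ _
          left_inv_neg_dmul[OF V0 Vp] VW] above Vp Wp by blast
  have "inv_neg W = V"
    unfolding inv_neg_def
  proof (rule the_equality)
    fix V' assume "(\<forall>i>0. V' i = zero_fn) \<and> W ** V' = lam 0 \<and> V' ** W = lam 0"
    then show "V' = V"
      using inverse_unique[OF dmul_assoc_bounded_above _ _ _ _ WV] above Vp Wp by blast
  qed (use Vp WV VW in simp)
  moreover have "smooth_coeffs V"
    unfolding smooth_coeffs_def V_def left_inv_neg_def
    using smooth_fn_inv_neg_coeff[OF W] smooth_fn_const by auto
  ultimately show ?thesis using Vp WV VW by simp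
qed

lemma inv_pos_inverse:
  assumes W0: "\<And>p. W 0 p \<noteq> 0" and Wn: "\<forall>i<0. W i = zero_fn" and W: "smooth_coeffs W"
  shows "(\<forall>i<0. inv_pos W i = zero_fn) \<and> W ** inv_pos W = lam 0 \<and> inv_pos W ** W = lam 0
    \<and> smooth_coeffs (inv_pos W)"
proof -
  define V where "V = left_inv_pos W"
  have Vn: "\<forall>i<0. V i = zero_fn"
    unfolding V_def left_inv_pos_def by simp
  have V0: "V 0 p \<noteq> 0" for p
    unfolding V_def left_inv_pos_def by (subst inv_pos_coeff.simps) (simp add: W0)
  have below: "bounded_below X" if "\<forall>i<0. X i = zero_fn" for X
    using that unfolding bounded_below_def by (metis not_le)
  have "bounded_below (left_inv_pos V)"
    by (rule below) (simp add: left_inv_pos_def)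
  moreover have VW: "V ** W = lam 0"
    unfolding V_def by (rule left_inv_pos_dmul[OF W0 Wn])
  ultimately have WV: "W ** V = lam 0"
    using left_inverse_is_right_inverse[OF dmul_assoc_bounded_below _ _ _
          left_inv_pos_dmul[OF V0 Vn] VW] below Vn Wn by blast
  have "inv_pos W = V"
    unfolding inv_pos_def
  proof (rule the_equality)
    fix V' assume "(\<forall>i<0. V' i = zero_fn) \<and> W ** V' = lam 0 \<and> V' ** W = lam 0"
    then show "V' = V"
      using inverse_unique[OF dmul_assoc_bounded_below _ _ _ _ WV] below Vn Wn by blast
  qed (use Vn WV VW in simp)
  moreover have "smooth_coeffs V"
    unfolding smooth_coeffs_def V_def left_inv_pos_def
    using smooth_fn_inv_pos_coeff[OF W W0] smooth_fn_const by auto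
  ultimately show ?thesis using Vn WV VW by simp
qed

lemma conjugate_dmul_conjugate:
  assumes assoc: "\<And>A B C. P A \<Longrightarrow> P B \<Longrightarrow> P C \<Longrightarrow> (A ** B) ** C = A ** (B ** C)"
    and cl: "\<And>A B. P A \<Longrightarrow> P B \<Longrightarrow> P (A ** B)" and pl: "\<And>n. P (lam n)"
    and W: "P W" and V: "P V" and VW: "V ** W = lam 0"
  shows "((W ** lam a) ** V) ** ((W ** lam b) ** V) = (W ** lam (a + b)) ** V"
proof -
  have "((W ** lam a) ** V) ** ((W ** lam b) ** V) = (W ** lam a) ** ((V ** (W ** lam b)) ** V)"
    by (simp add: assoc cl W V pl)
  also have "V ** (W ** lam b) = lam b"
    using assoc[OF V W pl, of b] VW by (simp add: lam_0_dmul)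
  also have "(W ** lam a) ** (lam b ** V) = (W ** (lam a ** lam b)) ** V"
    by (simp add: assoc cl W V pl)
  finally show ?thesis by (simp add: lam_dmul_lam)
qed

lemma dpd_left_inverse:
  assumes "V ** W = lam 0" and "mult_finite V W" "mult_finite V (dpd v W)" "mult_finite (dpd v V) W"
    and "smooth_coeffs V" "smooth_coeffs W"
  shows "dpd v V ** W = dsmul (-1) (V ** dpd v W)"
proof -
  have "dadd (dpd v V ** W) (V ** dpd v W) = dpd v (V ** W)"
    using assms(2,5,6) by (simp add: dpd_dmul)
  also have "\<dots> = dzero"
    using assms(1) by (simp add: dpd_lam)
  finally show ?thesis
    unfolding dadd_def dsmul_def dzero_def by (auto simp: fun_eq_iff eq_neg_iff_add_eq_0)
qed

text \<open>With the derivative d_s acting coefficientwise, W d_s W^-1 = d_s + W (d_s W^-1) as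
  operators, and it commutes with W \<Lambda>^a W^-1 because d_s commutes with \<Lambda>.\<close>

lemma dpd_conjugate_commutator:
  assumes assoc: "\<And>A B C. P A \<Longrightarrow> P B \<Longrightarrow> P C \<Longrightarrow> (A ** B) ** C = A ** (B ** C)"
    and fs: "\<And>A B. P A \<Longrightarrow> P B \<Longrightarrow> mult_finite A B"
    and cl: "\<And>A B. P A \<Longrightarrow> P B \<Longrightarrow> P (A ** B)" and pl: "\<And>n. P (lam n)"
    and pd: "\<And>A. P A \<Longrightarrow> P (dpd S A)" and ps: "\<And>A c. P A \<Longrightarrow> P (dsmul c A)"
    and W: "P W" and V: "P V" and VW: "V ** W = lam 0" and WV: "W ** V = lam 0"
    and sW: "smooth_coeffs W" and sV: "smooth_coeffs V"
  shows "((W ** dpd S V) ** ((W ** lam a) ** V)) i p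
        = (((W ** lam a) ** V) ** (W ** dpd S V)) i p - dpd S ((W ** lam a) ** V) i p"
proof -
  let ?W' = "dpd S W" and ?V' = "dpd S V"
  have W': "P ?W'" and V': "P ?V'" using pd W V by auto
  have "(W ** ?V') ** ((W ** lam a) ** V) = W ** (((?V' ** W) ** lam a) ** V)"
    by (simp add: assoc cl W V V' pl)
  also have "?V' ** W = dsmul (-1) (V ** ?W')"
    by (intro dpd_left_inverse VW fs V W W' V' sV sW)
  also have "W ** ((dsmul (-1) (V ** ?W') ** lam a) ** V) = dsmul (-1) ((W ** V) ** ((?W' ** lam a) ** V))"
    by (simp add: dmul_dsmul_left dmul_dsmul_right assoc fs cl ps W V W' pl)
  finally have LP: "(W ** ?V') ** ((W ** lam a) ** V) = dsmul (-1) ((?W' ** lam a) ** V)"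
    by (simp add: WV lam_0_dmul)
  have "((W ** lam a) ** V) ** (W ** ?V') = (W ** lam a) ** ((V ** W) ** ?V')"
    by (simp add: assoc cl W V V' pl)
  then have PL: "((W ** lam a) ** V) ** (W ** ?V') = (W ** lam a) ** ?V'"
    by (simp add: VW lam_0_dmul)
  have "dpd S (W ** lam a) = ?W' ** lam a"
    using dpd_dmul[OF fs[OF W pl] sW smooth_coeffs_lam] by (simp add: dpd_lam dmul_dzero dadd_dzero)
  then have DL: "dpd S ((W ** lam a) ** V) = dadd ((?W' ** lam a) ** V) ((W ** lam a) ** ?V')"
    using dpd_dmul[OF fs[OF cl[OF W pl] V] smooth_coeffs_dmul[OF fs[OF W pl] sW smooth_coeffs_lam] sV]
    by simp
  show ?thesis unfolding LP PL DL by (simp add: dadd_def dsmul_def)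
qed

section \<open>The dressing operators and the Lax operator\<close>

lemma Wop_0: "smooth_fn \<tau> \<Longrightarrow> (\<And>p. \<tau> p \<noteq> 0) \<Longrightarrow> Wop \<tau> 0 = (\<lambda>_. 1)"
  unfolding Wop_def by (simp add: Gc_eq_vertex_coeff)

lemma Wop_pos: "\<forall>i>0. Wop \<tau> i = zero_fn"
  unfolding Wop_def by auto

lemma smooth_coeffs_Wop:
  assumes "smooth_fn \<tau>" "\<And>p. \<tau> p \<noteq> 0"
  shows "smooth_coeffs (Wop \<tau>)"
  unfolding smooth_coeffs_def
proof
  fix i
  show "smooth_fn (Wop \<tau> i)"
  proof (cases "i \<le> 0")
    case True
    then have "Wop \<tau> i = (\<lambda>p. Gc (nat (- i)) \<tau> p / \<tau> p)" unfolding Wop_def by simp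
    then show ?thesis
      using assms by (simp add: Gc_eq_vertex_coeff smooth_fn_divide smooth_fn_vertex_coeff)
  qed (simp add: Wop_def smooth_fn_const)
qed

lemma Wbop_0: "smooth_fn \<tau> \<Longrightarrow> (\<And>p. \<tau> p \<noteq> 0) \<Longrightarrow> Wbop \<tau> 0 p \<noteq> 0"
  unfolding Wbop_def by (simp add: Gbc_eq_vertex_coeff)

lemma Wbop_neg: "\<forall>i<0. Wbop \<tau> i = zero_fn"
  unfolding Wbop_def by auto

lemma smooth_coeffs_Wbop:
  assumes "smooth_fn \<tau>" "\<And>p. \<tau> p \<noteq> 0"
  shows "smooth_coeffs (Wbop \<tau>)"
  unfolding smooth_coeffs_def
proof
  fix i
  show "smooth_fn (Wbop \<tau> i)"
  proof (cases "i \<ge> 0")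
    case True
    then have "Wbop \<tau> i = (\<lambda>p. Gbc (nat i) \<tau> p / \<tau> p)" unfolding Wbop_def by simp
    then show ?thesis
      using assms
      by (simp add: Gbc_eq_vertex_coeff smooth_fn_divide smooth_fn_shift smooth_fn_vertex_coeff)
  qed (simp add: Wbop_def smooth_fn_const)
qed

lemma inv_neg_Wop:
  assumes "smooth_fn \<tau>" "\<And>p. \<tau> p \<noteq> 0"
  shows "(\<forall>i>0. inv_neg (Wop \<tau>) i = zero_fn) \<and> Wop \<tau> ** inv_neg (Wop \<tau>) = lam 0
    \<and> inv_neg (Wop \<tau>) ** Wop \<tau> = lam 0 \<and> smooth_coeffs (inv_neg (Wop \<tau>))"
  using assms by (intro inv_neg_inverse Wop_0 Wop_pos smooth_coeffs_Wop)

lemma inv_pos_Wbop: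
  assumes "smooth_fn \<tau>" "\<And>p. \<tau> p \<noteq> 0"
  shows "(\<forall>i<0. inv_pos (Wbop \<tau>) i = zero_fn) \<and> Wbop \<tau> ** inv_pos (Wbop \<tau>) = lam 0
    \<and> inv_pos (Wbop \<tau>) ** Wbop \<tau> = lam 0 \<and> smooth_coeffs (inv_pos (Wbop \<tau>))"
  using assms by (intro inv_pos_inverse Wbop_0 Wbop_neg smooth_coeffs_Wbop)

lemma bounded_above_nonpos: "\<forall>i>0. A i = zero_fn \<Longrightarrow> bounded_above A"
  unfolding bounded_above_def by (metis not_le)

lemma bounded_below_nonneg: "\<forall>i<0. A i = zero_fn \<Longrightarrow> bounded_below A"
  unfolding bounded_below_def by (metis not_le)

lemma Lk_dmul_Lk:
  assumes "smooth_fn \<tau>" "\<And>p. \<tau> p \<noteq> 0"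
  shows "Lk \<tau> a ** Lk \<tau> b = Lk \<tau> (a + b)"
  unfolding Lk_def
proof (rule conjugate_dmul_conjugate[where P = bounded_above])
  show "bounded_above (Wop \<tau>)" "bounded_above (inv_neg (Wop \<tau>))"
    using inv_neg_Wop[OF assms] Wop_pos by (auto intro: bounded_above_nonpos)
  show "inv_neg (Wop \<tau>) ** Wop \<tau> = lam 0"
    using inv_neg_Wop[OF assms] by blast
qed (simp_all add: dmul_assoc_bounded_above bounded_above_dmul bounded_above_lam)

lemma Lm_dmul_Lm:
  assumes "smooth_fn \<tau>" "\<And>p. \<tau> p \<noteq> 0"
  shows "Lm \<tau> a ** Lm \<tau> b = Lm \<tau> (a + b)"
proof -
  have "Lm \<tau> a ** Lm \<tau> b = (Wbop \<tau> ** lam (- a + - b)) ** inv_pos (Wbop \<tau>)"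
    unfolding Lm_def
  proof (rule conjugate_dmul_conjugate[where P = bounded_below])
    show "bounded_below (Wbop \<tau>)" "bounded_below (inv_pos (Wbop \<tau>))"
      using inv_pos_Wbop[OF assms] Wbop_neg by (auto intro: bounded_below_nonneg)
    show "inv_pos (Wbop \<tau>) ** Wbop \<tau> = lam 0"
      using inv_pos_Wbop[OF assms] by blast
  qed (simp_all add: dmul_assoc_bounded_below bounded_below_dmul bounded_below_lam)
  then show ?thesis unfolding Lm_def by simp
qed

lemma Wop_dpd_commutator:
  assumes "smooth_fn \<tau>" "\<And>p. \<tau> p \<noteq> 0"
  shows "((Wop \<tau> ** dpd S (inv_neg (Wop \<tau>))) ** Lk \<tau> a) i p =
    (Lk \<tau> a ** (Wop \<tau> ** dpd S (inv_neg (Wop \<tau>)))) i p - dpd S (Lk \<tau> a) i p"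
  unfolding Lk_def
  using inv_neg_Wop[OF assms] Wop_pos smooth_coeffs_Wop[OF assms]
  by (intro dpd_conjugate_commutator[where P = bounded_above]) (auto intro: bounded_above_nonpos
      dmul_assoc_bounded_above mult_finite_bounded_above bounded_above_dmul bounded_above_lam
      bounded_above_dpd bounded_above_dsmul)

lemma Wbop_dpd_commutator:
  assumes "smooth_fn \<tau>" "\<And>p. \<tau> p \<noteq> 0"
  shows "((Wbop \<tau> ** dpd S (inv_pos (Wbop \<tau>))) ** Lm \<tau> a) i p =
    (Lm \<tau> a ** (Wbop \<tau> ** dpd S (inv_pos (Wbop \<tau>)))) i p - dpd S (Lm \<tau> a) i p"
  unfolding Lm_def
  using inv_pos_Wbop[OF assms] Wbop_neg smooth_coeffs_Wbop[OF assms]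
  by (intro dpd_conjugate_commutator[where P = bounded_below]) (auto intro: bounded_below_nonneg
      dmul_assoc_bounded_below mult_finite_bounded_below bounded_below_dmul bounded_below_lam
      bounded_below_dpd bounded_below_dsmul)

text \<open>Each half of log L has the same commutator -d_s L with L, so their difference commutes
  with L; here it is essential that L is both W \<Lambda>^k W^-1 and Wbar \<Lambda>^-m Wbar^-1.\<close>

lemma logL_commute:
  assumes "smooth_fn \<tau>" "\<And>p. \<tau> p \<noteq> 0" and L: "Lax k \<tau> = Lm \<tau> (int m)"
    and band: "banded (Lax k \<tau>)"
  shows "logL \<tau> ** Lax k \<tau> = Lax k \<tau> ** logL \<tau>"
proof -
  let ?L = "Lax k \<tau>"
  let ?P1 = "Wop \<tau> ** dpd S (inv_neg (Wop \<tau>))" and ?P2 = "Wbop \<tau> ** dpd S (inv_pos (Wbop \<tau>))"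
  have e1: "(?P1 ** ?L) i p = (?L ** ?P1) i p - dpd S ?L i p" for i p
    unfolding Lax_def by (rule Wop_dpd_commutator[OF assms(1,2)])
  have e2: "(?P2 ** ?L) i p = (?L ** ?P2) i p - dpd S ?L i p" for i p
    unfolding L by (rule Wbop_dpd_commutator[OF assms(1,2)])
  have "logL \<tau> ** ?L = dadd (dsmul (1/2) (?P1 ** ?L)) (dsmul (- 1/2) (?P2 ** ?L))"
    unfolding logL_def
    by (simp add: dmul_dadd_left dmul_dsmul_left mult_finite_banded_right[OF band])
  moreover have "?L ** logL \<tau> = dadd (dsmul (1/2) (?L ** ?P1)) (dsmul (- 1/2) (?L ** ?P2))"
    unfolding logL_def
    by (simp add: dmul_dadd_right dmul_dsmul_right mult_finite_banded_left[OF band])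
  ultimately show ?thesis
    by (intro ext) (simp add: dadd_def dsmul_def e1 e2 algebra_simps)
qed

lemma banded_dpow: "banded L \<Longrightarrow> banded (dpow L n)"
  by (induction n) (simp_all add: dpow_def banded_lam banded_dmul)

lemma dpow_commute: "banded L \<Longrightarrow> dpow L n ** L = L ** dpow L n"
proof (induction n)
  case 0
  then show ?case by (simp add: dpow_def lam_0_dmul dmul_lam_0)
next
  case (Suc n)
  have "dpow L (Suc n) ** L = L ** (dpow L n ** L)"
    unfolding dpow_def using Suc.prems by (simp add: dmul_assoc_banded_outer)
  also have "\<dots> = L ** dpow L (Suc n)"
    unfolding Suc.IH[OF Suc.prems] by (simp add: dpow_def)
  finally show ?case .
qed

lemma dmul_commute:
  assumes A: "banded A" and L: "banded L" and "A ** L = L ** A" and "B ** L = L ** B"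
  shows "(A ** B) ** L = L ** (A ** B)"
proof -
  have "(A ** B) ** L = A ** (L ** B)"
    using assms by (simp add: dmul_assoc_banded_outer)
  also have "\<dots> = (L ** A) ** B"
    using assms by (simp add: dmul_assoc_banded_left[symmetric])
  finally show ?thesis
    using assms by (simp add: dmul_assoc_banded_left)
qed

lemma dsmul_commute:
  "banded L \<Longrightarrow> A ** L = L ** A \<Longrightarrow> dsmul c A ** L = L ** dsmul c A"
  by (simp add: dmul_dsmul_left dmul_dsmul_right mult_finite_banded_left mult_finite_banded_right)

section \<open>The ASvM relations\<close>

lemma ASvM_flow:
  assumes t: "smooth_fn \<tau>" and nz: "\<And>p. \<tau> p \<noteq> 0" and comm: "a ** Lax k \<tau> = Lax k \<tau> ** a"
    and flow: "dpd v (Wop \<tau>) = dsmul (-1) (dminus a ** Wop \<tau>)"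
      "dpd v (Wbop \<tau>) = dplus a ** Wbop \<tau>"
  shows "ASvM k \<tau> a (pd v \<tau>)"
proof -
  have "(\<lambda>j p. - (dminus a ** Wop \<tau>) (- int j) p) = (\<lambda>j. pd v (Wop \<tau> (- int j)))"
    "(\<lambda>j. (dplus a ** Wbop \<tau>) (int j)) = (\<lambda>j. pd v (Wbop \<tau> (int j)))"
    using flow by (simp_all add: fun_eq_iff dpd_def dsmul_def)
  then show ?thesis
    unfolding ASvM_def using comm sdiv_pd_Wop[OF t nz] sdiv_pd_Wbop[OF t nz] by simp
qed

lemma pd_s_coord: "v \<noteq> S \<Longrightarrow> pd v (\<lambda>q. complex_of_real (q S)) = zero_fn"
  by (rule has_pd_imp_pd) (simp add: has_pd_def)

lemma dmi_s_coord:
  "(\<And>i. v i \<noteq> S) \<Longrightarrow>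
   dmi v m j (\<lambda>q. complex_of_real (q S)) = (if \<forall>i\<in>{1..j}. m i = 0 then (\<lambda>q. complex_of_real (q S)) else zero_fn)"
proof (induction j)
  case (Suc j)
  have "(pd w ^^ n) (\<lambda>q. complex_of_real (q S)) = (if n = 0 then (\<lambda>q. complex_of_real (q S)) else zero_fn)"
    if "w \<noteq> S" for w n
    using that by (induction n) (auto simp: pd_s_coord pd_const)
  moreover have "(\<forall>i\<in>{1..Suc j}. m i = 0) \<longleftrightarrow> (\<forall>i\<in>{1..j}. m i = 0) \<and> m (Suc j) = 0"
    by (auto simp: le_Suc_eq)
  ultimately show ?case using Suc by (simp add: funpow_pd_zero)
qed simp

lemma MI_nonzero:
  assumes "1 \<le> j" and "m \<in> MI j"
  shows "\<exists>i\<in>{1..j}. m i \<noteq> 0"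
proof (rule ccontr)
  assume "\<not> (\<exists>i\<in>{1..j}. m i \<noteq> 0)"
  then have "(\<Sum>i=1..j. i * m i) = 0" by simp
  then show False using assms unfolding MI_def by simp
qed

lemma Gc_s_coord:
  "Gc j (\<lambda>q. complex_of_real (q S)) = (if j = 0 then (\<lambda>q. complex_of_real (q S)) else zero_fn)"
proof (cases "j = 0")
  case False
  then have "dmi T m j (\<lambda>q. complex_of_real (q S)) = zero_fn" if "m \<in> MI j" for m
    using dmi_s_coord[of T m j] MI_nonzero[of j m] that by auto
  then show ?thesis unfolding Gc_def using False by simp
qed (simp add: Gc_def MI_0)

lemma Gbc_s_coord:
  "Gbc j (\<lambda>q. complex_of_real (q S)) = (if j = 0 then (\<lambda>q. complex_of_real (q S) + 1) else zero_fn)"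
proof (cases "j = 0")
  case False
  then have "dmi Tb m j (\<lambda>q. complex_of_real (q S)) = zero_fn" if "m \<in> MI j" for m
    using dmi_s_coord[of Tb m j] MI_nonzero[of j m] that by auto
  then show ?thesis unfolding Gbc_def using False by simp
qed (simp add: Gbc_def MI_0)

lemma ASvM_lam_0:
  assumes t: "smooth_fn \<tau>" and nz: "\<And>p. \<tau> p \<noteq> 0"
  shows "ASvM k \<tau> (lam 0) (\<lambda>q. complex_of_real (q S) * \<tau> q)"
proof -
  have h: "(\<lambda>q. complex_of_real (q S) * \<tau> q / \<tau> q) = (\<lambda>q. complex_of_real (q S))"
    using nz by auto
  have "dminus (lam 0) ** Wop \<tau> = (\<lambda>i. zero_fn)"
    by (intro ext dmul_eq_zero) (simp add: dminus_def lam_def)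
  then have "sdiv (\<lambda>j p. - (dminus (lam 0) ** Wop \<tau>) (- int j) p) (\<lambda>j. Wop \<tau> (- int j)) = (\<lambda>j. zero_fn)"
    by (intro sdiv_eqI) (simp_all add: Wop_0[OF t nz])
  moreover have "dplus (lam 0) = lam 0"
    by (auto simp: dplus_def lam_def fun_eq_iff)
  then have "dplus (lam 0) ** Wbop \<tau> = Wbop \<tau>"
    by (simp add: lam_0_dmul)
  then have "sdiv (\<lambda>j. (dplus (lam 0) ** Wbop \<tau>) (int j)) (\<lambda>j. Wbop \<tau> (int j)) = (\<lambda>j p. if j = 0 then 1 else 0)"
  proof (intro sdiv_eqI)
    fix j p
    have "(\<Sum>i\<le>j. (if i = 0 then 1 else 0) * Wbop \<tau> (int (j - i)) p) =
        (\<Sum>i\<le>j. if i = 0 then Wbop \<tau> (int (j - i)) p else 0)"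
      by (intro sum.cong) auto
    then show "(dplus (lam 0) ** Wbop \<tau>) (int j) p =
        (\<Sum>i\<le>j. (if i = 0 then 1 else 0) * Wbop \<tau> (int (j - i)) p)"
      using \<open>dplus (lam 0) ** Wbop \<tau> = Wbop \<tau>\<close> by simp
  qed (simp add: Wbop_0[OF t nz])
  ultimately show ?thesis
    unfolding ASvM_def h Gc_s_coord Gbc_s_coord using nz by (auto simp: lam_0_dmul dmul_lam_0 fun_eq_iff)
qed

theorem lemma4p2:
  fixes k m :: nat and \<tau> :: fn
  assumes "k \<ge> 1" and "m \<ge> 1"
    and "tau_fn k m \<tau>"
  shows "(\<forall>n\<ge>1. ASvM k \<tau> (Lk \<tau> (int n)) (pd (T n) \<tau>)) \<and>
         (\<forall>n\<ge>1. ASvM k \<tau> (Lm \<tau> (int n)) (pd (Tb n) \<tau>)) \<and>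
         (\<forall>p. ASvM k \<tau> (dsmul 2 (dpow (Lax k \<tau>) p ** logL \<tau>)) (pd (xv p) \<tau>)) \<and>
         ASvM k \<tau> (lam 0) (\<lambda>q. complex_of_real (q S) * \<tau> q)"
proof -
  note tau = assms(3)[unfolded tau_fn_def]
  have t: "smooth_fn \<tau>" and nz: "\<And>p. \<tau> p \<noteq> 0" and L: "Lax k \<tau> = Lm \<tau> (int m)"
    using tau by auto
  have band: "banded (Lax k \<tau>)"
    using tau unfolding banded_def bounded_above_def bounded_below_def by (meson not_le)
  have "Lk \<tau> n ** Lax k \<tau> = Lax k \<tau> ** Lk \<tau> n" for n
    unfolding Lax_def by (simp add: Lk_dmul_Lk[OF t nz] add.commute)
  moreover have "Lm \<tau> n ** Lax k \<tau> = Lax k \<tau> ** Lm \<tau> n" for n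
    unfolding L by (simp add: Lm_dmul_Lm[OF t nz] add.commute)
  moreover have "dsmul 2 (dpow (Lax k \<tau>) n ** logL \<tau>) ** Lax k \<tau> =
      Lax k \<tau> ** dsmul 2 (dpow (Lax k \<tau>) n ** logL \<tau>)" for n
    using band
    by (intro dsmul_commute dmul_commute banded_dpow dpow_commute logL_commute[OF t nz L band])
  ultimately show ?thesis
    using tau by (auto intro!: ASvM_flow t nz ASvM_lam_0)
qed

end
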